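(* Let $S$ be a set with $|S|\ge2$ and let $\Gamma$ be a connected simple graph with vertex set $S$. For each edge $e\in E(\Gamma)$ let $eV^{(S)}\le SV$ be the associated subgroup (isomorphic to $2V$). Then $\bigcup_{e\in E(\Gamma)}eV^{(S)}$ generates $SV$.
   Context: Let $\mathfrak C=\{0,1\}^{\omega}$ and let $\mathfrak C^S$ be the space of functions $S\to\mathfrak C$. For $\psi\colon S\to\{0,1\}^*$ with $\psi(s)=\varnothing$ for all but finitely many $s$, the dyadic brick $B(\psi)$ is the set of $\kappa\in\mathfrak C^S$ with $\psi(s)$ a prefix of $\kappa(s)$ for all $s$, and the canonical homeomorphism $\Phi_\psi\colon\mathfrak C^S\to B(\psi)$ is $\Phi_\psi(\kappa)(s)=\psi(s)\cdot\kappa(s)$. The Brin–Thompson group $SV$ is the group of homeomorphisms of $\mathfrak C^S$ for which there exist two partitions $B(\varphi_1),\dots,B(\varphi_n)$ and $B(\psi_1),\dots,B(\psi_n)$ of $\mathfrak C^S$ into dyadic bricks such that $h$ maps each $B(\varphi_i)$ to $B(\psi_i)$ via $\Phi_{\psi_i}\circ\Phi_{\varphi_i}^{-1}$. For $T\subseteq S$, writing $\mathfrak C^S=\mathfrak C^T\times\mathfrak C^{S\setminus T}$, let $TV^{(S)}$ be the subgroup of $SV$ consisting of maps of the form $(a,b)\mapsto(h(a),b)$ with $h\in TV$; it is isomorphic to $TV$, and for a two-element set $e$, $eV^{(S)}$ is isomorphic to Brin's group $2V$. *)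

theory Defs
  imports "HOL-Analysis.Analysis"
begin

text \<open>Points of C^T (T a subset of the index type 's) are represented extensionally
  as functions 's => cantor that are the constant-False sequence outside T.\<close>

type_synonym cantor = "nat \<Rightarrow> bool"

definition Cpow :: "'s set \<Rightarrow> ('s \<Rightarrow> cantor) set" where
  "Cpow T = {\<kappa>. \<forall>s. s \<notin> T \<longrightarrow> \<kappa> s = (\<lambda>_. False)}"

definition cat :: "bool list \<Rightarrow> cantor \<Rightarrow> cantor" where
  "cat w x = (\<lambda>n. if n < length w then w ! n else x (n - length w))"

definition brick_data :: "'s set \<Rightarrow> ('s \<Rightarrow> bool list) \<Rightarrow> bool" where
  "brick_data T \<psi> \<longleftrightarrow> finite {s. \<psi> s \<noteq> []} \<and> (\<forall>s. s \<notin> T \<longrightarrow> \<psi> s = [])"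

definition brick :: "'s set \<Rightarrow> ('s \<Rightarrow> bool list) \<Rightarrow> ('s \<Rightarrow> cantor) set" where
  "brick T \<psi> = {\<kappa> \<in> Cpow T. \<forall>s. \<forall>n < length (\<psi> s). \<kappa> s n = \<psi> s ! n}"

definition Phi :: "('s \<Rightarrow> bool list) \<Rightarrow> ('s \<Rightarrow> cantor) \<Rightarrow> ('s \<Rightarrow> cantor)" where
  "Phi \<psi> \<kappa> = (\<lambda>s. cat (\<psi> s) (\<kappa> s))"

definition Phi_inv :: "('s \<Rightarrow> bool list) \<Rightarrow> ('s \<Rightarrow> cantor) \<Rightarrow> ('s \<Rightarrow> cantor)" where
  "Phi_inv \<psi> \<kappa> = (\<lambda>s n. \<kappa> s (n + length (\<psi> s)))"

definition brick_partition :: "'s set \<Rightarrow> ('s \<Rightarrow> bool list) list \<Rightarrow> bool" where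
  "brick_partition T ps \<longleftrightarrow>
     (\<forall>i < length ps. brick_data T (ps ! i)) \<and>
     (\<forall>i < length ps. \<forall>j < length ps. i \<noteq> j \<longrightarrow> brick T (ps ! i) \<inter> brick T (ps ! j) = {}) \<and>
     (\<Union>i < length ps. brick T (ps ! i)) = Cpow T"

text \<open>The Brin--Thompson group TV acting on C^T (maps are taken to be the identity
  outside the carrier C^T so that they are uniquely determined).
  The topology on C^T is the subspace topology of the product topology.\<close>
definition BT :: "'s set \<Rightarrow> (('s \<Rightarrow> cantor) \<Rightarrow> ('s \<Rightarrow> cantor)) set" where
  "BT T = {h. (\<exists>g. homeomorphism (Cpow T) (Cpow T) h g) \<and>
              (\<forall>\<kappa>. \<kappa> \<notin> Cpow T \<longrightarrow> h \<kappa> = \<kappa>) \<and>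
              (\<exists>phis psis. length phis = length psis \<and>
                 brick_partition T phis \<and> brick_partition T psis \<and>
                 (\<forall>i < length phis. \<forall>\<kappa> \<in> brick T (phis ! i).
                     h \<kappa> = Phi (psis ! i) (Phi_inv (phis ! i) \<kappa>)))}"

text \<open>SV for S the whole index type.\<close>
abbreviation SV :: "(('s \<Rightarrow> cantor) \<Rightarrow> ('s \<Rightarrow> cantor)) set" where
  "SV \<equiv> BT UNIV"

definition restr :: "'s set \<Rightarrow> ('s \<Rightarrow> cantor) \<Rightarrow> ('s \<Rightarrow> cantor)" where
  "restr T \<kappa> = (\<lambda>s. if s \<in> T then \<kappa> s else (\<lambda>_. False))"

definition BT_in :: "'s set \<Rightarrow> (('s \<Rightarrow> cantor) \<Rightarrow> ('s \<Rightarrow> cantor)) set" where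
  "BT_in T = {f. \<exists>h \<in> BT T. \<forall>\<kappa>. f \<kappa> = (\<lambda>s. if s \<in> T then h (restr T \<kappa>) s else \<kappa> s)}"

inductive_set gen_group :: "('a \<Rightarrow> 'a) set \<Rightarrow> ('a \<Rightarrow> 'a) set" for A where
  gen_id: "id \<in> gen_group A"
| gen_base: "a \<in> A \<Longrightarrow> a \<in> gen_group A"
| gen_inv: "a \<in> A \<Longrightarrow> inv a \<in> gen_group A"
| gen_comp: "x \<in> gen_group A \<Longrightarrow> y \<in> gen_group A \<Longrightarrow> x \<circ> y \<in> gen_group A"

definition simple_graph_edges :: "'s set set \<Rightarrow> bool" where
  "simple_graph_edges E \<longleftrightarrow> (\<forall>e \<in> E. card e = 2)"

definition connected_graph :: "'s set set \<Rightarrow> bool" where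
  "connected_graph E \<longleftrightarrow> (\<forall>a b. (a, b) \<in> {(x, y). {x, y} \<in> E}\<^sup>*)"

end

theory Submission
  imports Defs
begin

text \<open>An element \<open>h\<close> of \<open>SV\<close> is canonical on the cells of a fine enough grid: on the cell of \<open>x\<close>
  determined by the first \<open>L\<close> digits of finitely many coordinates \<open>U\<close>, it replaces these prefixes
  by words \<open>\<beta> s\<close> of bounded length. A transfer moves an initial segment of one coordinate,
  whose length is read off by bounded stopping times, into another coordinate; it lies in
  \<open>eV\<^sup>(\<^sup>S\<^sup>)\<close> when the two coordinates form the edge \<open>e\<close>, and, conjugating along paths of the connected
  graph, all transfers between distinct coordinates lie in the generated group. Composing
  transfers, we first move into one vertex \<open>r\<close> the code of the cell of \<open>x\<close> together with, from
  every other coordinate, exactly as many digits as are needed to pad the new prefix of that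
  coordinate to a common length \<open>M\<close>; after \<open>h\<close>, we move \<open>M\<close> digits of every other coordinate back
  into \<open>r\<close>. The resulting conjugate of \<open>h\<close> only rewrites coordinate \<open>r\<close>, so it lies in
  \<open>eV\<^sup>(\<^sup>S\<^sup>)\<close> for any edge \<open>e\<close> at \<open>r\<close>.\<close>

section \<open>Finite prefixes and bricks\<close>

definition stake :: "nat \<Rightarrow> cantor \<Rightarrow> bool list" where
  "stake n x = map x [0..<n]"

definition sdrop :: "nat \<Rightarrow> cantor \<Rightarrow> cantor" where
  "sdrop n x = (\<lambda>i. x (i + n))"

lemma length_stake [simp]: "length (stake n x) = n"
  by (simp add: stake_def)

lemma nth_stake [simp]: "i < n \<Longrightarrow> stake n x ! i = x i"
  by (simp add: stake_def)

lemma stake_0 [simp]: "stake 0 x = []"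
  by (simp add: stake_def)

lemma sdrop_0 [simp]: "sdrop 0 x = x"
  by (simp add: sdrop_def)

lemma cat_Nil [simp]: "cat [] z = z"
  by (simp add: cat_def)

lemma sdrop_sdrop [simp]: "sdrop m (sdrop n x) = sdrop (n + m) x"
  by (simp add: sdrop_def add_ac)

lemma cat_stake_sdrop [simp]: "cat (stake n x) (sdrop n x) = x"
  by (auto simp: cat_def sdrop_def fun_eq_iff)

lemma cat_append: "cat (w @ v) z = cat w (cat v z)"
  by (auto simp: cat_def fun_eq_iff nth_append)

lemma stake_cat: "stake n (cat w z) = take n w @ stake (n - length w) z"
  by (rule nth_equalityI) (auto simp: cat_def nth_append min_def)

lemma stake_cat_le [simp]: "n \<le> length w \<Longrightarrow> stake n (cat w z) = take n w"
  by (simp add: stake_cat)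

lemma stake_cat_len [simp]: "stake (length w) (cat w z) = w"
  by (simp add: stake_cat)

lemma sdrop_cat: "sdrop n (cat w z) = cat (drop n w) (sdrop (n - length w) z)"
  by (rule ext) (auto simp: cat_def sdrop_def add.commute intro!: arg_cong[where f = z])

lemma sdrop_cat_le [simp]: "n \<le> length w \<Longrightarrow> sdrop n (cat w z) = cat (drop n w) z"
  by (simp add: sdrop_cat)

lemma sdrop_cat_len [simp]: "sdrop (length w) (cat w z) = z"
  by (simp add: sdrop_cat)

lemma stake_add: "stake (m + n) x = stake m x @ stake n (sdrop m x)"
  by (rule nth_equalityI) (auto simp: nth_append sdrop_def add.commute)

lemma take_stake: "m \<le> n \<Longrightarrow> take m (stake n x) = stake m x"
  by (rule nth_equalityI) auto

lemma stake_eq_prefix: "stake n x = stake n y \<Longrightarrow> m \<le> n \<Longrightarrow> stake m x = stake m y"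
  by (metis take_stake)

lemma sdrop_eq_cat_stake: "k \<le> n \<Longrightarrow> sdrop k x = cat (drop k (stake n x)) (sdrop n x)"
  by (metis cat_stake_sdrop length_stake sdrop_cat_le)

lemma Phi_apply: "Phi \<psi> \<kappa> s = cat (\<psi> s) (\<kappa> s)"
  by (simp add: Phi_def)

lemma Phi_inv_apply: "Phi_inv \<psi> \<kappa> s = sdrop (length (\<psi> s)) (\<kappa> s)"
  by (simp add: Phi_inv_def sdrop_def)

lemma Cpow_UNIV [simp]: "Cpow UNIV = UNIV"
  by (simp add: Cpow_def)

lemma mem_brick_iff:
  "\<kappa> \<in> brick T \<psi> \<longleftrightarrow> \<kappa> \<in> Cpow T \<and> (\<forall>s. stake (length (\<psi> s)) (\<kappa> s) = \<psi> s)"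
  unfolding brick_def by (auto simp: list_eq_iff_nth_eq)

lemma Phi_Phi_inv: "\<kappa> \<in> brick T \<psi> \<Longrightarrow> Phi \<psi> (Phi_inv \<psi> \<kappa>) = \<kappa>"
  by (rule ext) (metis Phi_apply Phi_inv_apply cat_stake_sdrop mem_brick_iff)

lemma Phi_inv_Phi [simp]: "Phi_inv \<psi> (Phi \<psi> z) = z"
  by (simp add: fun_eq_iff Phi_apply Phi_inv_apply)

lemma Phi_in_brick: "brick_data T \<psi> \<Longrightarrow> z \<in> Cpow T \<Longrightarrow> Phi \<psi> z \<in> brick T \<psi>"
  by (auto simp: mem_brick_iff Phi_apply Cpow_def brick_data_def)

lemma Phi_inv_in_Cpow: "brick_data T \<psi> \<Longrightarrow> \<kappa> \<in> Cpow T \<Longrightarrow> Phi_inv \<psi> \<kappa> \<in> Cpow T"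
  by (auto simp: Cpow_def Phi_inv_apply brick_data_def)

section \<open>A local normal form for \<open>TV\<close>\<close>

definition cell :: "'s set \<Rightarrow> nat \<Rightarrow> ('s \<Rightarrow> cantor) \<Rightarrow> 's \<Rightarrow> bool list" where
  "cell U N \<kappa> = (\<lambda>s. if s \<in> U then stake N (\<kappa> s) else [])"

definition canonical_on ::
  "'s set \<Rightarrow> (('s \<Rightarrow> cantor) \<Rightarrow> 's \<Rightarrow> cantor) \<Rightarrow> ('s \<Rightarrow> bool list) \<Rightarrow> ('s \<Rightarrow> bool list) \<Rightarrow> bool"
  where "canonical_on T f \<alpha> \<beta> \<longleftrightarrow> (\<forall>\<kappa> \<in> brick T \<alpha>. f \<kappa> = Phi \<beta> (Phi_inv \<alpha> \<kappa>))"

text \<open>For homeomorphisms of \<open>C\<^sup>T\<close> this characterises membership in \<open>TV\<close>, without reference to the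
  target partition.\<close>
definition locally_canonical :: "'s set \<Rightarrow> (('s \<Rightarrow> cantor) \<Rightarrow> 's \<Rightarrow> cantor) \<Rightarrow> bool" where
  "locally_canonical T f \<longleftrightarrow> (\<exists>U N. finite U \<and> U \<subseteq> T \<and>
     (\<forall>\<kappa> \<in> Cpow T. \<exists>\<beta>. brick_data T \<beta> \<and> canonical_on T f (cell U N \<kappa>) \<beta>))"

definition data_prefix :: "('s \<Rightarrow> bool list) \<Rightarrow> ('s \<Rightarrow> bool list) \<Rightarrow> bool" where
  "data_prefix \<alpha> \<alpha>' \<longleftrightarrow> (\<forall>s. length (\<alpha> s) \<le> length (\<alpha>' s) \<and> take (length (\<alpha> s)) (\<alpha>' s) = \<alpha> s)"

text \<open>The brick data of the image of a sub-brick \<open>B(\<alpha>') \<subseteq> B(\<alpha>)\<close> under \<open>\<Phi>\<^sub>\<beta> \<circ> \<Phi>\<^sub>\<alpha>\<^sup>-\<^sup>1\<close>.\<close>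
definition canonical_image ::
  "('s \<Rightarrow> bool list) \<Rightarrow> ('s \<Rightarrow> bool list) \<Rightarrow> ('s \<Rightarrow> bool list) \<Rightarrow> 's \<Rightarrow> bool list" where
  "canonical_image \<alpha> \<beta> \<alpha>' = (\<lambda>s. \<beta> s @ drop (length (\<alpha> s)) (\<alpha>' s))"

lemma brick_data_cell: "finite U \<Longrightarrow> U \<subseteq> T \<Longrightarrow> brick_data T (cell U N \<kappa>)"
  unfolding brick_data_def cell_def by (auto intro: finite_subset[of _ U])

lemma mem_brick_cell: "\<kappa> \<in> Cpow T \<Longrightarrow> \<kappa> \<in> brick T (cell U N \<kappa>)"
  by (auto simp: mem_brick_iff cell_def)

lemma cell_eq_if_mem_brick: "\<kappa>' \<in> brick T (cell U N \<kappa>) \<Longrightarrow> cell U N \<kappa>' = cell U N \<kappa>"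
  by (auto simp: mem_brick_iff cell_def fun_eq_iff) (metis length_stake)

lemma data_prefix_cell: "N \<le> N' \<Longrightarrow> U \<subseteq> U' \<Longrightarrow> data_prefix (cell U N \<kappa>) (cell U' N' \<kappa>)"
  by (auto simp: data_prefix_def cell_def take_stake)

lemma data_prefix_cell_if_mem_brick:
  assumes "\<kappa> \<in> brick T \<alpha>" and "\<And>s. \<alpha> s \<noteq> [] \<Longrightarrow> s \<in> U \<and> length (\<alpha> s) \<le> N"
  shows "data_prefix \<alpha> (cell U N \<kappa>)"
  unfolding data_prefix_def
proof
  fix s
  have "stake (length (\<alpha> s)) (\<kappa> s) = \<alpha> s"
    using assms(1) by (simp add: mem_brick_iff)
  then show "length (\<alpha> s) \<le> length (cell U N \<kappa> s) \<and> take (length (\<alpha> s)) (cell U N \<kappa> s) = \<alpha> s"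
    using assms(2)[of s] by (cases "\<alpha> s = []") (auto simp: cell_def take_stake)
qed

lemma cell_data_prefix_if_mem_brick:
  assumes "\<kappa> \<in> brick T \<gamma>" and "\<And>s. s \<in> U \<Longrightarrow> N \<le> length (\<gamma> s)"
  shows "data_prefix (cell U N \<kappa>) \<gamma>"
  unfolding data_prefix_def
proof
  fix s
  have "stake (length (\<gamma> s)) (\<kappa> s) = \<gamma> s"
    using assms(1) by (simp add: mem_brick_iff)
  then show "length (cell U N \<kappa> s) \<le> length (\<gamma> s) \<and> take (length (cell U N \<kappa> s)) (\<gamma> s) = cell U N \<kappa> s"
    using assms(2)[of s] by (cases "s \<in> U") (auto simp: cell_def take_stake[symmetric])
qed

lemma brick_antimono: "data_prefix \<alpha> \<alpha>' \<Longrightarrow> brick T \<alpha>' \<subseteq> brick T \<alpha>"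
  by (auto simp: data_prefix_def mem_brick_iff) (metis take_stake)

lemma brick_data_canonical_image:
  "brick_data T \<beta> \<Longrightarrow> brick_data T \<alpha>' \<Longrightarrow> brick_data T (canonical_image \<alpha> \<beta> \<alpha>')"
  unfolding brick_data_def canonical_image_def
  by (auto intro: finite_subset[of _ "{s. \<beta> s \<noteq> []} \<union> {s. \<alpha>' s \<noteq> []}"])

lemma canonical_on_refine:
  assumes can: "canonical_on T f \<alpha> \<beta>" and pre: "data_prefix \<alpha> \<alpha>'"
  shows "canonical_on T f \<alpha>' (canonical_image \<alpha> \<beta> \<alpha>')"
  unfolding canonical_on_def
proof (intro ballI, rule ext)
  fix \<kappa> s
  assume \<kappa>: "\<kappa> \<in> brick T \<alpha>'"
  have "stake (length (\<alpha>' s)) (\<kappa> s) = \<alpha>' s"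
    using \<kappa> by (simp add: mem_brick_iff)
  moreover have "length (\<alpha> s) \<le> length (\<alpha>' s)"
    using pre by (simp add: data_prefix_def)
  ultimately have drop: "sdrop (length (\<alpha> s)) (\<kappa> s)
      = cat (drop (length (\<alpha> s)) (\<alpha>' s)) (sdrop (length (\<alpha>' s)) (\<kappa> s))"
    by (metis sdrop_eq_cat_stake)
  have "\<kappa> \<in> brick T \<alpha>"
    using \<kappa> brick_antimono[OF pre] by blast
  then have "f \<kappa> s = cat (\<beta> s) (sdrop (length (\<alpha> s)) (\<kappa> s))"
    using can by (simp add: canonical_on_def Phi_apply Phi_inv_apply)
  also have "\<dots> = Phi (canonical_image \<alpha> \<beta> \<alpha>') (Phi_inv \<alpha>' \<kappa>) s"
    unfolding drop by (simp add: canonical_image_def Phi_apply Phi_inv_apply cat_append)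
  finally show "f \<kappa> s = Phi (canonical_image \<alpha> \<beta> \<alpha>') (Phi_inv \<alpha>' \<kappa>) s" .
qed

lemma mem_brick_imp_Cpow: "\<kappa> \<in> brick T \<psi> \<Longrightarrow> \<kappa> \<in> Cpow T"
  by (simp add: brick_def)

lemma canonical_on_mapsto:
  assumes "canonical_on T f \<alpha> \<beta>" "brick_data T \<alpha>" "brick_data T \<beta>" "\<kappa> \<in> brick T \<alpha>"
  shows "f \<kappa> \<in> brick T \<beta>"
proof -
  have "Phi_inv \<alpha> \<kappa> \<in> Cpow T"
    using assms(2,4) Phi_inv_in_Cpow mem_brick_imp_Cpow by blast
  then show ?thesis
    using assms(1,3,4) Phi_in_brick unfolding canonical_on_def by simp
qed

lemma canonical_on_preimage:
  assumes "canonical_on T f \<alpha> \<beta>" "brick_data T \<alpha>" "brick_data T \<beta>" "\<kappa> \<in> brick T \<beta>"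
  shows "Phi \<alpha> (Phi_inv \<beta> \<kappa>) \<in> brick T \<alpha>" and "f (Phi \<alpha> (Phi_inv \<beta> \<kappa>)) = \<kappa>"
proof -
  have "Phi_inv \<beta> \<kappa> \<in> Cpow T"
    using assms(3,4) Phi_inv_in_Cpow mem_brick_imp_Cpow by blast
  then show *: "Phi \<alpha> (Phi_inv \<beta> \<kappa>) \<in> brick T \<alpha>"
    using assms(2) Phi_in_brick by blast
  show "f (Phi \<alpha> (Phi_inv \<beta> \<kappa>)) = \<kappa>"
    using assms(1) * Phi_Phi_inv[OF assms(4)] unfolding canonical_on_def by simp
qed

lemma brick_partition_bounded:
  assumes "brick_partition T phis"
  obtains U N where "finite U" "U \<subseteq> T"
    and "\<And>i s. i < length phis \<Longrightarrow> (phis ! i) s \<noteq> [] \<Longrightarrow> s \<in> U \<and> length ((phis ! i) s) \<le> N"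
proof
  define U where "U = (\<Union>i<length phis. {s. (phis ! i) s \<noteq> []})"
  have "brick_data T (phis ! i)" if "i < length phis" for i
    using assms that by (simp add: brick_partition_def)
  then show "finite U" "U \<subseteq> T"
    unfolding U_def by (auto simp: brick_data_def)
  then have "finite ((\<lambda>(i, s). length ((phis ! i) s)) ` ({..<length phis} \<times> U))"
    by blast
  moreover have "(i, s) \<in> {..<length phis} \<times> U" if "i < length phis" "(phis ! i) s \<noteq> []" for i s
    using that by (auto simp: U_def)
  ultimately show "s \<in> U \<and> length ((phis ! i) s) \<le> Max ((\<lambda>(i, s). length ((phis ! i) s)) ` ({..<length phis} \<times> U))"
    if "i < length phis" "(phis ! i) s \<noteq> []" for i s
    using that by (auto intro!: Max_ge)
qed

lemma BT_imp_locally_canonical: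
  assumes "f \<in> BT T"
  shows "locally_canonical T f"
proof -
  from assms obtain phis psis where len: "length phis = length psis"
    and phis: "brick_partition T phis" and psis: "brick_partition T psis"
    and can: "\<And>i. i < length phis \<Longrightarrow> canonical_on T f (phis ! i) (psis ! i)"
    unfolding BT_def canonical_on_def by blast
  obtain U N where U: "finite U" "U \<subseteq> T"
    and bounded: "\<And>i s. i < length phis \<Longrightarrow> (phis ! i) s \<noteq> [] \<Longrightarrow> s \<in> U \<and> length ((phis ! i) s) \<le> N"
    using brick_partition_bounded[OF phis] by blast
  have "\<exists>\<beta>. brick_data T \<beta> \<and> canonical_on T f (cell U N \<kappa>) \<beta>" if \<kappa>: "\<kappa> \<in> Cpow T" for \<kappa>
  proof -
    have "\<kappa> \<in> (\<Union>i<length phis. brick T (phis ! i))"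
      using phis \<kappa> by (simp add: brick_partition_def)
    then obtain i where i: "i < length phis" and "\<kappa> \<in> brick T (phis ! i)"
      by blast
    then have "data_prefix (phis ! i) (cell U N \<kappa>)"
      using bounded by (intro data_prefix_cell_if_mem_brick) auto
    then have "canonical_on T f (cell U N \<kappa>) (canonical_image (phis ! i) (psis ! i) (cell U N \<kappa>))"
      by (rule canonical_on_refine[OF can[OF i]])
    moreover have "brick_data T (psis ! i)"
      using psis i len by (simp add: brick_partition_def)
    then have "brick_data T (canonical_image (phis ! i) (psis ! i) (cell U N \<kappa>))"
      using brick_data_canonical_image brick_data_cell[OF U] by blast
    ultimately show ?thesis
      by blast
  qed
  with U show ?thesis
    unfolding locally_canonical_def by (intro exI[of _ U] exI[of _ N]) auto
qed

lemma finite_cells: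
  assumes "finite U"
  shows "finite (cell U N ` A)"
proof -
  let ?W = "{xs :: bool list. length xs = N}"
  let ?extend = "\<lambda>F s. if s \<in> U then F s else []"
  have "cell U N ` A \<subseteq> ?extend ` (U \<rightarrow>\<^sub>E ?W)"
  proof
    fix g assume "g \<in> cell U N ` A"
    then obtain \<kappa> where g: "g = cell U N \<kappa>" by auto
    have "restrict (\<lambda>s. stake N (\<kappa> s)) U \<in> U \<rightarrow>\<^sub>E ?W" by auto
    moreover have "g = ?extend (restrict (\<lambda>s. stake N (\<kappa> s)) U)"
      by (auto simp: g cell_def)
    ultimately show "g \<in> ?extend ` (U \<rightarrow>\<^sub>E ?W)" by blast
  qed
  moreover have "finite ?W"
    using finite_lists_length_eq[of "UNIV :: bool set" N] by simp
  ultimately show ?thesis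
    using assms by (meson finite_PiE finite_imageI finite_subset)
qed

lemma brick_partition_cells:
  assumes "finite U" "U \<subseteq> T" "distinct phis" "set phis = cell U N ` Cpow T"
  shows "brick_partition T phis"
  unfolding brick_partition_def
proof (intro conjI allI impI)
  show "brick_data T (phis ! i)" if "i < length phis" for i
    using assms brick_data_cell nth_mem[OF that] by auto
  show "brick T (phis ! i) \<inter> brick T (phis ! j) = {}"
    if ij: "i < length phis" "j < length phis" "i \<noteq> j" for i j
  proof -
    obtain \<kappa>\<^sub>i \<kappa>\<^sub>j where cells: "phis ! i = cell U N \<kappa>\<^sub>i" "phis ! j = cell U N \<kappa>\<^sub>j"
      using assms(4) nth_mem[OF ij(1)] nth_mem[OF ij(2)] by (metis imageE)
    have "phis ! i \<noteq> phis ! j"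
      using assms(3) ij by (simp add: nth_eq_iff_index_eq)
    moreover have "phis ! i = phis ! j" if "\<kappa> \<in> brick T (phis ! i)" "\<kappa> \<in> brick T (phis ! j)" for \<kappa>
      using that cell_eq_if_mem_brick unfolding cells by metis
    ultimately show ?thesis
      by blast
  qed
  show "(\<Union>i<length phis. brick T (phis ! i)) = Cpow T"
  proof
    show "Cpow T \<subseteq> (\<Union>i<length phis. brick T (phis ! i))"
    proof
      fix \<kappa> assume \<kappa>: "\<kappa> \<in> Cpow T"
      then have "cell U N \<kappa> \<in> set phis"
        using assms(4) by blast
      then obtain i where "i < length phis" "phis ! i = cell U N \<kappa>"
        by (auto simp: in_set_conv_nth)
      then show "\<kappa> \<in> (\<Union>i<length phis. brick T (phis ! i))"
        using mem_brick_cell[OF \<kappa>] by force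
    qed
  qed (auto simp: brick_def)
qed

lemma brick_partition_image:
  assumes inj: "inj_on f (Cpow T)" and onto: "f ` Cpow T = Cpow T"
    and len: "length phis = length psis" and phis: "brick_partition T phis"
    and dat: "\<And>i. i < length psis \<Longrightarrow> brick_data T (psis ! i)"
    and can: "\<And>i. i < length phis \<Longrightarrow> canonical_on T f (phis ! i) (psis ! i)"
  shows "brick_partition T psis"
  unfolding brick_partition_def
proof (intro conjI allI impI)
  have dat_phis: "\<And>i. i < length phis \<Longrightarrow> brick_data T (phis ! i)"
    using phis by (simp add: brick_partition_def)
  show "brick_data T (psis ! i)" if "i < length psis" for i
    using dat that .
  show "brick T (psis ! i) \<inter> brick T (psis ! j) = {}"
    if ij: "i < length psis" "j < length psis" "i \<noteq> j" for i j
  proof (rule ccontr)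
    assume "brick T (psis ! i) \<inter> brick T (psis ! j) \<noteq> {}"
    then obtain \<kappa> where \<kappa>: "\<kappa> \<in> brick T (psis ! i)" "\<kappa> \<in> brick T (psis ! j)" by auto
    define z where "z k = Phi (phis ! k) (Phi_inv (psis ! k) \<kappa>)" for k
    have "z k \<in> brick T (phis ! k) \<and> f (z k) = \<kappa>" if "k \<in> {i, j}" for k
      using canonical_on_preimage[OF can dat_phis dat] \<kappa> that ij len by (auto simp: z_def)
    moreover have "brick T (phis ! k) \<subseteq> Cpow T" for k
      by (auto simp: brick_def)
    ultimately have "z i = z j" "z i \<in> brick T (phis ! i)" "z j \<in> brick T (phis ! j)"
      using inj_onD[OF inj, of "z i" "z j"] by blast+
    then show False
      using phis ij len by (auto simp: brick_partition_def)
  qed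
  show "(\<Union>i<length psis. brick T (psis ! i)) = Cpow T"
  proof
    show "Cpow T \<subseteq> (\<Union>i<length psis. brick T (psis ! i))"
    proof
      fix y assume "y \<in> Cpow T"
      then obtain x where x: "x \<in> Cpow T" "y = f x"
        using onto by auto
      then have "x \<in> (\<Union>i<length phis. brick T (phis ! i))"
        using phis by (simp add: brick_partition_def)
      then obtain i where "i < length phis" "x \<in> brick T (phis ! i)"
        by blast
      then show "y \<in> (\<Union>i<length psis. brick T (psis ! i))"
        using canonical_on_mapsto[OF can dat_phis dat] x len by auto
    qed
  qed (auto simp: brick_def)
qed

lemma locally_canonical_imp_BT:
  assumes hom: "homeomorphism (Cpow T) (Cpow T) f g"
    and off: "\<forall>\<kappa>. \<kappa> \<notin> Cpow T \<longrightarrow> f \<kappa> = \<kappa>"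
    and loc: "locally_canonical T f"
  shows "f \<in> BT T"
proof -
  from loc obtain U N where U: "finite U" "U \<subseteq> T"
    and ex: "\<forall>\<kappa> \<in> Cpow T. \<exists>\<beta>. brick_data T \<beta> \<and> canonical_on T f (cell U N \<kappa>) \<beta>"
    unfolding locally_canonical_def by blast
  obtain phis where phis: "distinct phis" "set phis = cell U N ` Cpow T"
    using finite_distinct_list[OF finite_cells[OF U(1)]] by blast
  define image where "image \<alpha> = (SOME \<beta>. brick_data T \<beta> \<and> canonical_on T f \<alpha> \<beta>)" for \<alpha>
  define psis where "psis = map image phis"
  have image: "brick_data T (image \<alpha>) \<and> canonical_on T f \<alpha> (image \<alpha>)" if "\<alpha> \<in> set phis" for \<alpha>
  proof -
    have "\<exists>\<beta>. brick_data T \<beta> \<and> canonical_on T f \<alpha> \<beta>"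
      using that phis ex by auto
    then show ?thesis
      unfolding image_def by (rule someI_ex)
  qed
  have len: "length phis = length psis"
    by (simp add: psis_def)
  have psis: "brick_data T (psis ! i)" "canonical_on T f (phis ! i) (psis ! i)"
    if "i < length phis" for i
    using image[OF nth_mem[OF that]] that by (simp_all add: psis_def)
  have inj: "inj_on f (Cpow T)"
    by (rule inj_on_inverseI[where g = g]) (rule homeomorphism_apply1[OF hom])
  have onto: "f ` Cpow T = Cpow T"
    using hom by (simp add: homeomorphism_def)
  have partition: "brick_partition T phis"
    using brick_partition_cells[OF U phis] .
  have "brick_partition T psis"
    by (rule brick_partition_image[OF inj onto len partition]) (use psis len in auto)
  then have "\<exists>phis psis. length phis = length psis \<and>
      brick_partition T phis \<and> brick_partition T psis \<and>
      (\<forall>i < length phis. \<forall>\<kappa> \<in> brick T (phis ! i). f \<kappa> = Phi (psis ! i) (Phi_inv (phis ! i) \<kappa>))"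
    using len partition psis(2) unfolding canonical_on_def by blast
  then show ?thesis
    unfolding BT_def using hom off by blast
qed

lemma locally_canonical_comp:
  assumes f1: "locally_canonical T f1" and f2: "locally_canonical T f2"
    and maps: "\<forall>\<kappa> \<in> Cpow T. f1 \<kappa> \<in> Cpow T"
  shows "locally_canonical T (f2 \<circ> f1)"
proof -
  from f1 obtain U1 N1 where U1: "finite U1" "U1 \<subseteq> T"
    and ex1: "\<forall>\<kappa> \<in> Cpow T. \<exists>\<beta>. brick_data T \<beta> \<and> canonical_on T f1 (cell U1 N1 \<kappa>) \<beta>"
    unfolding locally_canonical_def by blast
  from f2 obtain U2 N2 where U2: "finite U2" "U2 \<subseteq> T"
    and ex2: "\<forall>\<kappa> \<in> Cpow T. \<exists>\<beta>. brick_data T \<beta> \<and> canonical_on T f2 (cell U2 N2 \<kappa>) \<beta>"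
    unfolding locally_canonical_def by blast
  define U where "U = U1 \<union> U2"
  define N where "N = N1 + N2"
  have U: "finite U" "U \<subseteq> T"
    using U1 U2 by (auto simp: U_def)
  have "\<exists>\<beta>. brick_data T \<beta> \<and> canonical_on T (f2 \<circ> f1) (cell U N \<kappa>) \<beta>" if \<kappa>: "\<kappa> \<in> Cpow T" for \<kappa>
  proof -
    obtain \<beta>1 where \<beta>1: "brick_data T \<beta>1" "canonical_on T f1 (cell U1 N1 \<kappa>) \<beta>1"
      using ex1 \<kappa> by blast
    define \<gamma> where "\<gamma> = canonical_image (cell U1 N1 \<kappa>) \<beta>1 (cell U N \<kappa>)"
    have can1: "canonical_on T f1 (cell U N \<kappa>) \<gamma>"
      unfolding \<gamma>_def by (rule canonical_on_refine[OF \<beta>1(2) data_prefix_cell]) (auto simp: U_def N_def)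
    have dat1: "brick_data T \<gamma>"
      unfolding \<gamma>_def by (rule brick_data_canonical_image[OF \<beta>1(1) brick_data_cell[OF U]])
    have f1\<kappa>: "f1 \<kappa> \<in> brick T \<gamma>"
      using canonical_on_mapsto[OF can1 brick_data_cell[OF U] dat1 mem_brick_cell[OF \<kappa>]] .
    obtain \<beta>2 where \<beta>2: "brick_data T \<beta>2" "canonical_on T f2 (cell U2 N2 (f1 \<kappa>)) \<beta>2"
      using ex2 maps \<kappa> by blast
    \<comment> \<open>the image of the finer cell is still fine enough for \<open>f2\<close>\<close>
    have "data_prefix (cell U2 N2 (f1 \<kappa>)) \<gamma>"
      using f1\<kappa> by (rule cell_data_prefix_if_mem_brick)
        (simp add: \<gamma>_def canonical_image_def cell_def U_def N_def)
    then have can2: "canonical_on T f2 \<gamma> (canonical_image (cell U2 N2 (f1 \<kappa>)) \<beta>2 \<gamma>)"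
      by (rule canonical_on_refine[OF \<beta>2(2)])
    have "canonical_on T (f2 \<circ> f1) (cell U N \<kappa>) (canonical_image (cell U2 N2 (f1 \<kappa>)) \<beta>2 \<gamma>)"
      unfolding canonical_on_def
    proof
      fix x assume x: "x \<in> brick T (cell U N \<kappa>)"
      then have "f1 x \<in> brick T \<gamma>"
        by (rule canonical_on_mapsto[OF can1 brick_data_cell[OF U] dat1])
      then show "(f2 \<circ> f1) x = Phi (canonical_image (cell U2 N2 (f1 \<kappa>)) \<beta>2 \<gamma>) (Phi_inv (cell U N \<kappa>) x)"
        using can1 can2 x by (simp add: canonical_on_def)
    qed
    then show ?thesis
      using brick_data_canonical_image[OF \<beta>2(1) dat1] by blast
  qed
  then show ?thesis
    unfolding locally_canonical_def using U by blast
qed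

section \<open>Continuity and the group structure of \<open>SV\<close>\<close>

lemma Hausdorff_space_euclidean_bool: "Hausdorff_space (euclidean :: bool topology)"
  unfolding Hausdorff_space_def
  by (metis disjnt_insert1 disjnt_empty1 insert_iff open_discrete open_openin)

lemma compact_space_euclidean_bool: "compact_space (euclidean :: bool topology)"
  by (simp add: compact_space_def finite_imp_compact)

lemma Hausdorff_space_euclidean_fun:
  "Hausdorff_space (euclidean :: 'a::topological_space topology) \<Longrightarrow>
    Hausdorff_space (euclidean :: ('i \<Rightarrow> 'a) topology)"
  by (metis euclidean_product_topology Hausdorff_space_product_topology)

lemma compact_space_euclidean_fun:
  "compact_space (euclidean :: 'a::topological_space topology) \<Longrightarrow>
    compact_space (euclidean :: ('i \<Rightarrow> 'a) topology)"
  by (metis euclidean_product_topology compact_space_product_topology)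

lemma bij_continuous_imp_homeomorphism:
  fixes f :: "('s \<Rightarrow> cantor) \<Rightarrow> 's \<Rightarrow> cantor"
  assumes cont: "continuous_on UNIV f" and "bij f"
  shows "\<exists>g. homeomorphism UNIV UNIV f g"
proof -
  have "compact_space (euclidean :: ('s \<Rightarrow> cantor) topology)"
    "Hausdorff_space (euclidean :: ('s \<Rightarrow> cantor) topology)"
    by (intro compact_space_euclidean_fun Hausdorff_space_euclidean_fun
        compact_space_euclidean_bool Hausdorff_space_euclidean_bool)+
  moreover have "continuous_map euclidean euclidean f"
    using cont by (metis continuous_map_iff_continuous subtopology_UNIV)
  ultimately have closed: "closed_map euclidean euclidean f"
    using continuous_imp_closed_map_gen Hausdorff_imp_kc_space by blast
  obtain g where "homeomorphism UNIV UNIV f g"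
  proof (rule homeomorphism_injective_closed_map[OF cont])
    show "f ` UNIV = UNIV" "inj_on f UNIV"
      using \<open>bij f\<close> by (simp_all add: bij_def)
    show "closedin (top_of_set UNIV) (f ` U)" if "closedin (top_of_set UNIV) U" for U
      using closed that by (simp add: closed_map_def)
  qed
  then show ?thesis
    by blast
qed

lemma continuous_on_digit: "continuous_on UNIV (\<lambda>\<kappa> :: 's \<Rightarrow> cantor. \<kappa> s n)"
  by (rule continuous_on_compose2[OF continuous_on_product_coordinates
        continuous_on_product_coordinates]) auto

lemma open_brick_cell:
  fixes x :: "'s \<Rightarrow> cantor"
  assumes "finite U"
  shows "open (brick UNIV (cell U N x))"
proof -
  have "brick UNIV (cell U N x) = (\<Inter>s\<in>U. \<Inter>n\<in>{..<N}. (\<lambda>\<kappa>. \<kappa> s n) -` {x s n})"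
    by (auto simp: brick_def cell_def)
  moreover have "open ((\<lambda>\<kappa> :: 's \<Rightarrow> cantor. \<kappa> s n) -` {x s n})" for s n
    using continuous_on_digit[of s n]
    by (metis continuous_on_open_vimage inf_top.right_neutral open_UNIV open_discrete)
  ultimately show ?thesis
    using assms by (auto intro!: open_INT)
qed

lemma continuous_on_Phi_Phi_inv: "continuous_on UNIV (\<lambda>\<kappa>. Phi \<beta> (Phi_inv \<alpha> \<kappa>))"
proof (intro continuous_on_coordinatewise_then_product)
  fix s n
  show "continuous_on UNIV (\<lambda>\<kappa>. Phi \<beta> (Phi_inv \<alpha> \<kappa>) s n)"
  proof (cases "n < length (\<beta> s)")
    case True
    then show ?thesis
      by (simp add: Phi_apply cat_def)
  next
    case False
    then have "(\<lambda>\<kappa>. Phi \<beta> (Phi_inv \<alpha> \<kappa>) s n) = (\<lambda>\<kappa>. \<kappa> s (n - length (\<beta> s) + length (\<alpha> s)))"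
      by (simp add: Phi_apply cat_def Phi_inv_apply sdrop_def)
    then show ?thesis
      by (metis continuous_on_digit)
  qed
qed

lemma locally_canonical_imp_continuous:
  fixes f :: "('s \<Rightarrow> cantor) \<Rightarrow> 's \<Rightarrow> cantor"
  assumes "locally_canonical UNIV f"
  shows "continuous_on UNIV f"
proof -
  from assms obtain U N where U: "finite U"
    and ex: "\<forall>\<kappa>. \<exists>\<beta>. brick_data UNIV \<beta> \<and> canonical_on UNIV f (cell U N \<kappa>) \<beta>"
    unfolding locally_canonical_def by auto
  define image where "image x = (SOME \<beta>. canonical_on UNIV f (cell U N x) \<beta>)" for x
  have image: "canonical_on UNIV f (cell U N x) (image x)" for x
  proof -
    have "\<exists>\<beta>. canonical_on UNIV f (cell U N x) \<beta>"
      using ex by blast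
    then show ?thesis
      unfolding image_def by (rule someI_ex)
  qed
  define F where "F x \<kappa> = Phi (image x) (Phi_inv (cell U N x) \<kappa>)" for x \<kappa>
  \<comment> \<open>on each cell \<open>f\<close> agrees with a continuous map, and the cells are open\<close>
  have "open (f -` S)" if S: "open S" for S
  proof -
    have eq: "f -` S = (\<Union>x\<in>f -` S. brick UNIV (cell U N x) \<inter> F x -` S)"
    proof
      show "f -` S \<subseteq> (\<Union>x\<in>f -` S. brick UNIV (cell U N x) \<inter> F x -` S)"
      proof
        fix x assume x: "x \<in> f -` S"
        have "x \<in> brick UNIV (cell U N x)"
          by (rule mem_brick_cell) simp
        moreover then have "F x x = f x"
          using image[of x] by (simp add: canonical_on_def F_def)
        ultimately show "x \<in> (\<Union>x\<in>f -` S. brick UNIV (cell U N x) \<inter> F x -` S)"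
          using x by blast
      qed
      show "(\<Union>x\<in>f -` S. brick UNIV (cell U N x) \<inter> F x -` S) \<subseteq> f -` S"
        using image by (auto simp: canonical_on_def F_def)
    qed
    have "open (brick UNIV (cell U N x) \<inter> F x -` S)" for x
    proof -
      have "open (F x -` S)"
        using continuous_on_Phi_Phi_inv S unfolding F_def
        by (metis continuous_on_open_vimage inf_top.right_neutral open_UNIV)
      then show ?thesis
        using open_brick_cell[OF U] by blast
    qed
    then show ?thesis
      by (subst eq) (intro open_UN ballI)
  qed
  then show ?thesis
    by (simp add: continuous_on_open_vimage)
qed

lemma bij_locally_canonical_imp_SV:
  fixes f :: "('s \<Rightarrow> cantor) \<Rightarrow> 's \<Rightarrow> cantor"
  assumes "bij f" "locally_canonical UNIV f"
  shows "f \<in> SV"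
proof -
  obtain g where "homeomorphism UNIV UNIV f g"
    using bij_continuous_imp_homeomorphism locally_canonical_imp_continuous assms by blast
  then show ?thesis
    using locally_canonical_imp_BT[of UNIV f g] assms by simp
qed

lemma SV_imp_bij:
  assumes "f \<in> SV"
  shows "bij f"
proof -
  from assms obtain g where "homeomorphism UNIV UNIV f g"
    unfolding BT_def Cpow_UNIV by blast
  then have "\<And>x. g (f x) = x" "\<And>y. f (g y) = y"
    by (auto simp: homeomorphism_def)
  then show ?thesis
    by (metis bij_betw_byWitness top_greatest)
qed

lemma id_in_SV: "id \<in> SV"
proof (rule bij_locally_canonical_imp_SV)
  have "brick_data UNIV (\<lambda>_. [])" "canonical_on UNIV id (cell {} 0 \<kappa>) (\<lambda>_. [])" for \<kappa> :: "'s \<Rightarrow> cantor"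
    by (simp_all add: brick_data_def canonical_on_def cell_def Phi_def Phi_inv_def)
  then show "locally_canonical UNIV (id :: ('s \<Rightarrow> cantor) \<Rightarrow> _)"
    unfolding locally_canonical_def by (intro exI[of _ "{}"] exI[of _ 0]) auto
qed simp

lemma SV_comp:
  assumes "f \<in> SV" "g \<in> SV"
  shows "g \<circ> f \<in> SV"
proof (rule bij_locally_canonical_imp_SV)
  show "bij (g \<circ> f)"
    using assms SV_imp_bij bij_comp by blast
  show "locally_canonical UNIV (g \<circ> f)"
    by (rule locally_canonical_comp[OF BT_imp_locally_canonical[OF assms(1)]
        BT_imp_locally_canonical[OF assms(2)]]) simp
qed

lemma SV_inv:
  assumes "f \<in> SV"
  shows "inv f \<in> SV"
proof -
  from assms obtain g where hom: "homeomorphism UNIV UNIV f g"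
    unfolding BT_def Cpow_UNIV by blast
  from assms obtain phis psis where len: "length phis = length psis"
    and phis: "brick_partition UNIV phis" and psis: "brick_partition UNIV psis"
    and "\<forall>i < length phis. \<forall>\<kappa> \<in> brick UNIV (phis ! i). f \<kappa> = Phi (psis ! i) (Phi_inv (phis ! i) \<kappa>)"
    unfolding BT_def by blast
  then have can: "\<And>i. i < length phis \<Longrightarrow> canonical_on UNIV f (phis ! i) (psis ! i)"
    by (simp add: canonical_on_def)
  have "bij f"
    using assms by (rule SV_imp_bij)
  have g: "g = inv f"
  proof
    fix y
    have "f (g y) = y"
      using hom by (simp add: homeomorphism_def)
    then show "g y = inv f y"
      using \<open>bij f\<close> by (metis bij_inv_eq_iff)
  qed
  have "canonical_on UNIV (inv f) (psis ! i) (phis ! i)" if i: "i < length psis" for i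
    unfolding canonical_on_def
  proof
    fix \<kappa> assume \<kappa>: "\<kappa> \<in> brick UNIV (psis ! i)"
    have "brick_data UNIV (phis ! i)" "brick_data UNIV (psis ! i)"
      using phis psis i len by (auto simp: brick_partition_def)
    then have "f (Phi (phis ! i) (Phi_inv (psis ! i) \<kappa>)) = \<kappa>"
      using canonical_on_preimage(2)[OF can _ _ \<kappa>] i len by simp
    then show "inv f \<kappa> = Phi (phis ! i) (Phi_inv (psis ! i) \<kappa>)"
      using \<open>bij f\<close> by (metis bij_inv_eq_iff)
  qed
  then have "\<exists>phis' psis'. length phis' = length psis' \<and>
      brick_partition UNIV phis' \<and> brick_partition UNIV psis' \<and>
      (\<forall>i < length phis'. \<forall>\<kappa> \<in> brick UNIV (phis' ! i). inv f \<kappa> = Phi (psis' ! i) (Phi_inv (phis' ! i) \<kappa>))"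
    using len phis psis unfolding canonical_on_def by (intro exI[of _ psis] exI[of _ phis]) simp
  moreover have "homeomorphism UNIV UNIV (inv f) f"
    using hom unfolding g by (simp add: homeomorphism_symD)
  ultimately show ?thesis
    unfolding BT_def Cpow_UNIV mem_Collect_eq by blast
qed

section \<open>The subgroups \<open>TV\<^sup>(\<^sup>S\<^sup>)\<close>\<close>

definition extend_map :: "'s set \<Rightarrow> (('s \<Rightarrow> cantor) \<Rightarrow> 's \<Rightarrow> cantor) \<Rightarrow> ('s \<Rightarrow> cantor) \<Rightarrow> 's \<Rightarrow> cantor"
  where "extend_map T h \<kappa> = (\<lambda>s. if s \<in> T then h (restr T \<kappa>) s else \<kappa> s)"

definition restrict_map :: "'s set \<Rightarrow> (('s \<Rightarrow> cantor) \<Rightarrow> 's \<Rightarrow> cantor) \<Rightarrow> ('s \<Rightarrow> cantor) \<Rightarrow> 's \<Rightarrow> cantor"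
  where "restrict_map T f \<kappa> = (if \<kappa> \<in> Cpow T then f \<kappa> else \<kappa>)"

lemma BT_in_eq: "BT_in T = extend_map T ` BT T"
proof -
  have "(\<forall>\<kappa>. f \<kappa> = (\<lambda>s. if s \<in> T then h (restr T \<kappa>) s else \<kappa> s)) \<longleftrightarrow> f = extend_map T h" for f h
    unfolding extend_map_def by (simp add: fun_eq_iff)
  then show ?thesis
    unfolding BT_in_def image_def by simp
qed

lemma restr_in_Cpow: "restr T \<kappa> \<in> Cpow T"
  by (simp add: restr_def Cpow_def)

lemma restr_extend_map: "h (restr T \<kappa>) \<in> Cpow T \<Longrightarrow> restr T (extend_map T h \<kappa>) = h (restr T \<kappa>)"
  by (auto simp: restr_def extend_map_def Cpow_def fun_eq_iff)

lemma extend_map_comp: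
  assumes "\<And>\<kappa>. \<kappa> \<in> Cpow T \<Longrightarrow> h1 \<kappa> \<in> Cpow T"
  shows "extend_map T h2 \<circ> extend_map T h1 = extend_map T (h2 \<circ> h1)"
proof (rule ext, rule ext)
  fix \<kappa> s
  have "restr T (extend_map T h1 \<kappa>) = h1 (restr T \<kappa>)"
    by (rule restr_extend_map) (rule assms[OF restr_in_Cpow])
  then show "(extend_map T h2 \<circ> extend_map T h1) \<kappa> s = extend_map T (h2 \<circ> h1) \<kappa> s"
    by (simp add: extend_map_def)
qed

lemma extend_map_eq_id:
  assumes "\<And>\<kappa>. \<kappa> \<in> Cpow T \<Longrightarrow> h \<kappa> = \<kappa>"
  shows "extend_map T h = id"
proof (rule ext, rule ext)
  fix \<kappa> s
  have "h (restr T \<kappa>) = restr T \<kappa>"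
    by (rule assms[OF restr_in_Cpow])
  then show "extend_map T h \<kappa> s = id \<kappa> s"
    by (simp add: extend_map_def restr_def)
qed

lemma bij_extend_map:
  assumes "homeomorphism (Cpow T) (Cpow T) h g"
  shows "bij (extend_map T h)"
proof (rule o_bij)
  have maps: "\<And>\<kappa>. \<kappa> \<in> Cpow T \<Longrightarrow> h \<kappa> \<in> Cpow T" "\<And>\<kappa>. \<kappa> \<in> Cpow T \<Longrightarrow> g \<kappa> \<in> Cpow T"
    and inverse: "\<And>\<kappa>. \<kappa> \<in> Cpow T \<Longrightarrow> g (h \<kappa>) = \<kappa>" "\<And>\<kappa>. \<kappa> \<in> Cpow T \<Longrightarrow> h (g \<kappa>) = \<kappa>"
    using assms by (auto simp: homeomorphism_def)
  have "extend_map T g \<circ> extend_map T h = extend_map T (g \<circ> h)"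
    using maps(1) by (rule extend_map_comp)
  also have "\<dots> = id"
    using inverse(1) by (intro extend_map_eq_id) simp
  finally show "extend_map T g \<circ> extend_map T h = id" .
  have "extend_map T h \<circ> extend_map T g = extend_map T (h \<circ> g)"
    using maps(2) by (rule extend_map_comp)
  also have "\<dots> = id"
    using inverse(2) by (intro extend_map_eq_id) simp
  finally show "extend_map T h \<circ> extend_map T g = id" .
qed

lemma locally_canonical_extend_map:
  assumes "locally_canonical T h"
  shows "locally_canonical UNIV (extend_map T h)"
proof -
  from assms obtain U N where U: "finite U" "U \<subseteq> T"
    and ex: "\<forall>\<kappa> \<in> Cpow T. \<exists>\<beta>. brick_data T \<beta> \<and> canonical_on T h (cell U N \<kappa>) \<beta>"
    unfolding locally_canonical_def by blast
  have "\<exists>\<beta>. brick_data UNIV \<beta> \<and> canonical_on UNIV (extend_map T h) (cell U N \<kappa>) \<beta>" for \<kappa>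
  proof -
    have "cell U N (restr T \<kappa>) = cell U N \<kappa>"
      using U by (auto simp: cell_def restr_def fun_eq_iff)
    then obtain \<beta> where \<beta>: "brick_data T \<beta>" "canonical_on T h (cell U N \<kappa>) \<beta>"
      using ex[rule_format, OF restr_in_Cpow[of T \<kappa>]] by auto
    have "canonical_on UNIV (extend_map T h) (cell U N \<kappa>) \<beta>"
      unfolding canonical_on_def
    proof (intro ballI, rule ext)
      fix x s assume x: "x \<in> brick UNIV (cell U N \<kappa>)"
      have "stake (length (cell U N \<kappa> t)) (restr T x t) = cell U N \<kappa> t" for t
      proof (cases "t \<in> T")
        case True
        then show ?thesis
          using x unfolding mem_brick_iff by (simp add: restr_def)
      next
        case False
        then show ?thesis
          using U by (auto simp: cell_def)
      qed
      then have "restr T x \<in> brick T (cell U N \<kappa>)"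
        by (simp add: mem_brick_iff restr_in_Cpow)
      then have hx: "h (restr T x) = Phi \<beta> (Phi_inv (cell U N \<kappa>) (restr T x))"
        using \<beta>(2) by (simp add: canonical_on_def)
      show "extend_map T h x s = Phi \<beta> (Phi_inv (cell U N \<kappa>) x) s"
      proof (cases "s \<in> T")
        case True
        then show ?thesis
          by (simp add: extend_map_def hx) (simp add: Phi_apply Phi_inv_apply restr_def)
      next
        case False
        then have "\<beta> s = []" "s \<notin> U"
          using \<beta>(1) U by (auto simp: brick_data_def)
        then show ?thesis
          using False by (simp add: extend_map_def Phi_apply Phi_inv_apply cell_def)
      qed
    qed
    moreover have "brick_data UNIV \<beta>"
      using \<beta>(1) by (simp add: brick_data_def)
    ultimately show ?thesis
      by blast
  qed
  with U show ?thesis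
    unfolding locally_canonical_def by (intro exI[of _ U] exI[of _ N]) auto
qed

lemma BT_in_imp_SV:
  assumes "f \<in> BT_in T"
  shows "f \<in> SV"
proof -
  from assms obtain h where h: "h \<in> BT T" and f: "f = extend_map T h"
    unfolding BT_in_eq by blast
  from h obtain g where "homeomorphism (Cpow T) (Cpow T) h g"
    unfolding BT_def by blast
  then have "bij f"
    unfolding f by (rule bij_extend_map)
  moreover have "locally_canonical UNIV f"
    unfolding f using h by (intro locally_canonical_extend_map BT_imp_locally_canonical)
  ultimately show ?thesis
    by (rule bij_locally_canonical_imp_SV)
qed

lemma homeomorphism_restrict_map:
  assumes hom: "homeomorphism UNIV UNIV f g"
    and off: "\<And>\<kappa> s. s \<notin> T \<Longrightarrow> f \<kappa> s = \<kappa> s"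
  shows "homeomorphism (Cpow T) (Cpow T) (restrict_map T f) g"
proof -
  have fg: "\<And>\<kappa>. g (f \<kappa>) = \<kappa>" "\<And>\<kappa>. f (g \<kappa>) = \<kappa>"
    using hom by (auto simp: homeomorphism_def)
  have f_Cpow: "f \<kappa> \<in> Cpow T" if "\<kappa> \<in> Cpow T" for \<kappa>
    using that off by (simp add: Cpow_def)
  have g_Cpow: "g \<kappa> \<in> Cpow T" if "\<kappa> \<in> Cpow T" for \<kappa>
    using that off[of _ "g \<kappa>"] by (simp add: Cpow_def fg)
  have cont: "continuous_on (Cpow T) f" "continuous_on (Cpow T) g"
    using hom continuous_on_subset by (auto simp: homeomorphism_def)
  have "continuous_on (Cpow T) (restrict_map T f)"
    using cont(1) by (rule continuous_on_eq) (simp add: restrict_map_def)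
  moreover have "restrict_map T f ` Cpow T = Cpow T"
  proof
    show "Cpow T \<subseteq> restrict_map T f ` Cpow T"
    proof
      fix \<kappa> assume "\<kappa> \<in> Cpow T"
      then show "\<kappa> \<in> restrict_map T f ` Cpow T"
        using g_Cpow fg(2) by (metis image_eqI restrict_map_def)
    qed
  qed (use f_Cpow in \<open>auto simp: restrict_map_def\<close>)
  moreover have "g ` Cpow T = Cpow T"
  proof
    show "Cpow T \<subseteq> g ` Cpow T"
    proof
      fix \<kappa> assume "\<kappa> \<in> Cpow T"
      then show "\<kappa> \<in> g ` Cpow T"
        using f_Cpow fg(1) by (metis image_eqI)
    qed
  qed (use g_Cpow in auto)
  ultimately show ?thesis
    unfolding homeomorphism_def using cont(2) fg g_Cpow by (simp add: restrict_map_def)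
qed

lemma locally_canonical_restrict_map:
  assumes loc: "locally_canonical UNIV f"
    and off: "\<And>\<kappa> s. s \<notin> T \<Longrightarrow> f \<kappa> s = \<kappa> s"
  shows "locally_canonical T (restrict_map T f)"
proof -
  from loc obtain U N where U: "finite U"
    and ex: "\<forall>\<kappa>. \<exists>\<beta>. brick_data UNIV \<beta> \<and> canonical_on UNIV f (cell U N \<kappa>) \<beta>"
    unfolding locally_canonical_def by auto
  have "\<exists>\<beta>. brick_data T \<beta> \<and> canonical_on T (restrict_map T f) (cell (U \<inter> T) N \<kappa>) \<beta>"
    if \<kappa>: "\<kappa> \<in> Cpow T" for \<kappa>
  proof -
    obtain \<beta> where \<beta>: "brick_data UNIV \<beta>" "canonical_on UNIV f (cell U N \<kappa>) \<beta>"
      using ex by blast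
    define \<beta>' where "\<beta>' s = (if s \<in> T then \<beta> s else [])" for s
    have "brick_data T \<beta>'"
      using \<beta>(1) unfolding brick_data_def \<beta>'_def by (auto intro: finite_subset[of _ "{s. \<beta> s \<noteq> []}"])
    moreover have "canonical_on T (restrict_map T f) (cell (U \<inter> T) N \<kappa>) \<beta>'"
      unfolding canonical_on_def
    proof (intro ballI, rule ext)
      fix x s assume x: "x \<in> brick T (cell (U \<inter> T) N \<kappa>)"
      then have "x \<in> Cpow T"
        by (rule mem_brick_imp_Cpow)
      have "stake (length (cell U N \<kappa> t)) (x t) = cell U N \<kappa> t" for t
      proof (cases "t \<in> T")
        case True
        then have "cell (U \<inter> T) N \<kappa> t = cell U N \<kappa> t"
          by (simp add: cell_def)
        then show ?thesis
          using x unfolding mem_brick_iff by metis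
      next
        case False
        \<comment> \<open>outside \<open>T\<close> both points are zero\<close>
        then have "x t = \<kappa> t"
          using \<open>x \<in> Cpow T\<close> \<kappa> by (simp add: Cpow_def)
        then show ?thesis
          by (simp add: cell_def)
      qed
      then have "x \<in> brick UNIV (cell U N \<kappa>)"
        by (simp add: mem_brick_iff)
      then have "f x = Phi \<beta> (Phi_inv (cell U N \<kappa>) x)"
        using \<beta>(2) by (simp add: canonical_on_def)
      then show "restrict_map T f x s = Phi \<beta>' (Phi_inv (cell (U \<inter> T) N \<kappa>) x) s"
      proof (cases "s \<in> T")
        case True
        then show ?thesis
          using \<open>f x = _\<close> \<open>x \<in> Cpow T\<close>
          by (simp add: restrict_map_def Phi_apply Phi_inv_apply cell_def \<beta>'_def)
      next
        case False
        then show ?thesis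
          using \<open>x \<in> Cpow T\<close> off by (simp add: restrict_map_def Phi_apply Phi_inv_apply cell_def \<beta>'_def)
      qed
    qed
    ultimately show ?thesis
      by blast
  qed
  with U show ?thesis
    unfolding locally_canonical_def by (intro exI[of _ "U \<inter> T"] exI[of _ N]) auto
qed

lemma SV_local_imp_BT_in:
  assumes f: "f \<in> SV"
    and off: "\<And>\<kappa> s. s \<notin> T \<Longrightarrow> f \<kappa> s = \<kappa> s"
    and local: "\<And>\<kappa> \<kappa>' s. (\<forall>t \<in> T. \<kappa> t = \<kappa>' t) \<Longrightarrow> s \<in> T \<Longrightarrow> f \<kappa> s = f \<kappa>' s"
  shows "f \<in> BT_in T"
proof -
  from f obtain g where "homeomorphism UNIV UNIV f g"
    unfolding BT_def Cpow_UNIV by blast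
  then have hom: "homeomorphism (Cpow T) (Cpow T) (restrict_map T f) g"
    using off by (rule homeomorphism_restrict_map)
  have "locally_canonical T (restrict_map T f)"
    using BT_imp_locally_canonical[OF f] off by (rule locally_canonical_restrict_map)
  then have "restrict_map T f \<in> BT T"
    by (rule locally_canonical_imp_BT[OF hom, rotated]) (simp add: restrict_map_def)
  moreover have "f = extend_map T (restrict_map T f)"
  proof (rule ext, rule ext)
    fix \<kappa> s
    show "f \<kappa> s = extend_map T (restrict_map T f) \<kappa> s"
    proof (cases "s \<in> T")
      case True
      then have "f (restr T \<kappa>) s = f \<kappa> s"
        by (intro local) (auto simp: restr_def)
      moreover have "restrict_map T f (restr T \<kappa>) = f (restr T \<kappa>)"
        by (simp add: restrict_map_def restr_in_Cpow)
      ultimately show ?thesis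
        using True by (simp add: extend_map_def)
    next
      case False
      then show ?thesis
        using off by (simp add: extend_map_def)
    qed
  qed
  ultimately show ?thesis
    unfolding BT_in_eq by blast
qed

section \<open>Transfers\<close>

definition stopping_time :: "(cantor \<Rightarrow> nat) \<Rightarrow> bool" where
  "stopping_time \<sigma> \<longleftrightarrow> (\<forall>x y. stake (\<sigma> x) y = stake (\<sigma> x) x \<longrightarrow> \<sigma> y = \<sigma> x)"

definition admissible :: "(cantor \<Rightarrow> nat) \<Rightarrow> (bool list \<Rightarrow> cantor \<Rightarrow> nat) \<Rightarrow> bool" where
  "admissible \<sigma> \<rho> \<longleftrightarrow> stopping_time \<sigma> \<and> (\<forall>w. stopping_time (\<rho> w)) \<and>
     (\<exists>B. \<forall>z y. \<sigma> z + \<rho> (stake (\<sigma> z) z) y \<le> B)"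

definition transfer ::
  "'s \<Rightarrow> 's \<Rightarrow> (cantor \<Rightarrow> nat) \<Rightarrow> (bool list \<Rightarrow> cantor \<Rightarrow> nat) \<Rightarrow> ('s \<Rightarrow> cantor) \<Rightarrow> 's \<Rightarrow> cantor" where
  "transfer a b \<sigma> \<rho> \<kappa> = (let x = \<kappa> a; k = \<sigma> x; p = stake k x; y = \<kappa> b; l = \<rho> p y in
     \<kappa>(a := cat (p @ stake l y) (sdrop k x), b := sdrop l y))"

definition transfer_back ::
  "'s \<Rightarrow> 's \<Rightarrow> (cantor \<Rightarrow> nat) \<Rightarrow> (bool list \<Rightarrow> cantor \<Rightarrow> nat) \<Rightarrow> ('s \<Rightarrow> cantor) \<Rightarrow> 's \<Rightarrow> cantor" where
  "transfer_back a b \<sigma> \<rho> \<kappa> = (let z = \<kappa> a; k = \<sigma> z; p = stake k z; z' = sdrop k z; l = \<rho> p z' in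
     \<kappa>(a := cat p (sdrop l z'), b := cat (stake l z') (\<kappa> b)))"

lemma stopping_timeD: "stopping_time \<sigma> \<Longrightarrow> stake (\<sigma> x) y = stake (\<sigma> x) x \<Longrightarrow> \<sigma> y = \<sigma> x"
  unfolding stopping_time_def by blast

lemma stopping_time_cat: "stopping_time \<sigma> \<Longrightarrow> \<sigma> (cat (stake (\<sigma> x) x) w) = \<sigma> x"
  using stopping_timeD[of \<sigma> x "cat (stake (\<sigma> x) x) w"] by (simp add: stake_cat)

lemma stopping_time_cat_prefix:
  "stopping_time \<sigma> \<Longrightarrow> \<sigma> x = length p \<Longrightarrow> stake (length p) x = p \<Longrightarrow> \<sigma> (cat p w) = length p"
  using stopping_timeD[of \<sigma> x "cat p w"] by simp

lemma transfer_back_transfer: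
  assumes "a \<noteq> b" "admissible \<sigma> \<rho>"
  shows "transfer_back a b \<sigma> \<rho> (transfer a b \<sigma> \<rho> \<kappa>) = \<kappa>"
proof -
  have s: "stopping_time \<sigma>" and r: "\<And>w. stopping_time (\<rho> w)"
    using assms(2) by (auto simp: admissible_def)
  define x where "x = \<kappa> a"
  define k where "k = \<sigma> x"
  define p where "p = stake k x"
  define y where "y = \<kappa> b"
  define l where "l = \<rho> p y"
  define q where "q = stake l y"
  have c: "transfer a b \<sigma> \<rho> \<kappa> = \<kappa>(a := cat (p @ q) (sdrop k x), b := sdrop l y)"
    by (simp add: transfer_def Let_def x_def k_def p_def y_def l_def q_def)
  have lp: "length p = k" by (simp add: p_def)
  have sk: "\<sigma> (cat (p @ q) (sdrop k x)) = k"
    unfolding cat_append k_def p_def using stopping_time_cat[OF s] by simp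
  have sl: "\<rho> p (cat q (sdrop k x)) = l"
    unfolding l_def q_def using stopping_time_cat[OF r] by simp
  define K where "K = transfer a b \<sigma> \<rho> \<kappa>"
  have Ka: "K a = cat (p @ q) (sdrop k x)" and Kb: "K b = sdrop l y"
    using assms(1) by (simp_all add: K_def c)
  have lq: "length q = l" by (simp add: q_def)
  have z1: "stake k (K a) = p" using lp Ka by simp
  have z2: "sdrop k (K a) = cat q (sdrop k x)" using lp Ka by simp
  have sK: "\<sigma> (K a) = k" using Ka sk by simp
  have z3: "\<rho> p (sdrop k (K a)) = l" using z2 sl by simp
  have ea: "cat p (sdrop l (cat q (sdrop k x))) = \<kappa> a"
    using lq by (simp add: p_def x_def)
  have eb: "cat (stake l (cat q (sdrop k x))) (K b) = \<kappa> b"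
    using lq Kb by (simp add: q_def y_def)
  have "transfer_back a b \<sigma> \<rho> K = K(a := cat p (sdrop l (cat q (sdrop k x))), b := cat (stake l (cat q (sdrop k x))) (K b))"
    by (simp add: transfer_back_def Let_def sK z1 z2 z3 sl del: sdrop_sdrop)
  also have "\<dots> = \<kappa>" using ea eb assms(1) by (auto simp: fun_eq_iff K_def c)
  finally show ?thesis by (simp add: K_def)
qed

lemma transfer_transfer_back:
  assumes "a \<noteq> b" "admissible \<sigma> \<rho>"
  shows "transfer a b \<sigma> \<rho> (transfer_back a b \<sigma> \<rho> \<kappa>) = \<kappa>"
proof -
  have s: "stopping_time \<sigma>" and r: "\<And>w. stopping_time (\<rho> w)"
    using assms(2) by (auto simp: admissible_def)
  define z where "z = \<kappa> a"
  define k where "k = \<sigma> z"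
  define p where "p = stake k z"
  define z' where "z' = sdrop k z"
  define l where "l = \<rho> p z'"
  define q where "q = stake l z'"
  define K where "K = transfer_back a b \<sigma> \<rho> \<kappa>"
  have Ka: "K a = cat p (sdrop l z')" and Kb: "K b = cat q (\<kappa> b)" using assms(1)
    by (simp_all add: K_def transfer_back_def Let_def z_def k_def p_def z'_def l_def q_def)
  have lp: "length p = k" by (simp add: p_def)
  have lq: "length q = l" by (simp add: q_def)
  have sK: "\<sigma> (K a) = k" unfolding Ka
    using stopping_time_cat_prefix[OF s, of z p] lp by (simp add: p_def k_def)
  have stK: "stake k (K a) = p" unfolding Ka using lp by simp
  have rK: "\<rho> p (K b) = l" unfolding Kb q_def l_def by (rule stopping_time_cat[OF r])
  have sq: "stake l (K b) = q" unfolding Kb using lq by simp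
  have sdK: "sdrop k (K a) = sdrop l z'" unfolding Ka using lp by simp
  have sdb: "sdrop l (K b) = \<kappa> b" unfolding Kb using lq by simp
  have ea: "cat (p @ q) (sdrop l z') = \<kappa> a"
    by (simp add: cat_append q_def z'_def p_def z_def del: sdrop_sdrop)
  have "transfer a b \<sigma> \<rho> K = K(a := cat (p @ q) (sdrop l z'), b := \<kappa> b)"
    by (simp add: transfer_def Let_def sK stK rK sq sdK sdb del: sdrop_sdrop)
  also have "\<dots> = \<kappa>" using ea assms(1) by (auto simp: fun_eq_iff K_def transfer_back_def Let_def)
  finally show ?thesis by (simp add: K_def)
qed

lemma bij_transfer: "a \<noteq> b \<Longrightarrow> admissible \<sigma> \<rho> \<Longrightarrow> bij (transfer a b \<sigma> \<rho>)"
  by (rule bij_betw_byWitness[of UNIV "transfer_back a b \<sigma> \<rho>"])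
    (auto simp: transfer_back_transfer transfer_transfer_back)

lemma locally_canonical_transfer:
  assumes ab: "a \<noteq> b" and g: "admissible \<sigma> \<rho>"
  shows "locally_canonical UNIV (transfer a b \<sigma> \<rho>)"
proof -
  have s: "stopping_time \<sigma>" and r: "\<And>w. stopping_time (\<rho> w)" using g by (auto simp: admissible_def)
  obtain B where B: "\<And>z y. \<sigma> z + \<rho> (stake (\<sigma> z) z) y \<le> B" using g by (auto simp: admissible_def)
  have "\<exists>\<beta>. brick_data UNIV \<beta> \<and> canonical_on UNIV (transfer a b \<sigma> \<rho>) (cell {a,b} B \<kappa>) \<beta>" for \<kappa>
  proof -
    define x where "x = \<kappa> a"
    define k where "k = \<sigma> x"
    define p where "p = stake k x"
    define y where "y = \<kappa> b"
    define l where "l = \<rho> p y"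
    define q where "q = stake l y"
    have kl: "k + l \<le> B" using B[of x y] by (simp add: k_def l_def p_def)
    define \<beta> where "\<beta> = (\<lambda>s. if s = a then p @ q @ drop k (stake B x) else if s = b then drop l (stake B y) else [])"
    have "brick_data UNIV \<beta>"
      unfolding brick_data_def by (auto intro: finite_subset[of _ "{a,b}"] simp: \<beta>_def)
    moreover have "canonical_on UNIV (transfer a b \<sigma> \<rho>) (cell {a,b} B \<kappa>) \<beta>"
      unfolding canonical_on_def
    proof
      fix \<kappa>' assume k': "\<kappa>' \<in> brick UNIV (cell {a,b} B \<kappa>)"
      have sa: "stake B (\<kappa>' a) = stake B x" and sb: "stake B (\<kappa>' b) = stake B y"
        using k' by (auto simp: mem_brick_iff cell_def x_def y_def dest: spec[of _ a] spec[of _ b])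
      have sk: "stake k (\<kappa>' a) = p" using sa kl by (metis le_add1 order_trans stake_eq_prefix p_def)
      have k1: "\<sigma> (\<kappa>' a) = k" using stopping_timeD[OF s, of x "\<kappa>' a"] sk by (simp add: k_def p_def)
      have sl: "stake l (\<kappa>' b) = q" using sb kl by (metis le_add2 order_trans stake_eq_prefix q_def)
      have l1: "\<rho> p (\<kappa>' b) = l"
        using stopping_timeD[OF r, of p y "\<kappa>' b"] sl by (simp add: l_def q_def)
      have da: "sdrop k (\<kappa>' a) = cat (drop k (stake B x)) (sdrop B (\<kappa>' a))"
        using sdrop_eq_cat_stake[of k B "\<kappa>' a"] kl sa by simp
      have db: "sdrop l (\<kappa>' b) = cat (drop l (stake B y)) (sdrop B (\<kappa>' b))"
        using sdrop_eq_cat_stake[of l B "\<kappa>' b"] kl sb by simp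
      have ga: "length (cell {a,b} B \<kappa> a) = B" "length (cell {a,b} B \<kappa> b) = B"
        by (simp_all add: cell_def)
      show "transfer a b \<sigma> \<rho> \<kappa>' = Phi \<beta> (Phi_inv (cell {a,b} B \<kappa>) \<kappa>')"
      proof
        fix s
        show "transfer a b \<sigma> \<rho> \<kappa>' s = Phi \<beta> (Phi_inv (cell {a,b} B \<kappa>) \<kappa>') s"
        proof (cases "s = a")
          case True
          then show ?thesis using ab k1 sk l1 sl da ga
            by (simp add: transfer_def Let_def Phi_apply Phi_inv_apply \<beta>_def cat_append)
        next
          case False
          show ?thesis
          proof (cases "s = b")
            case True
            then show ?thesis using ab k1 sk l1 sl db ga
              by (simp add: transfer_def Let_def Phi_apply Phi_inv_apply \<beta>_def)
          next
            case False
            then show ?thesis using \<open>s \<noteq> a\<close>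
              by (simp add: transfer_def Let_def Phi_apply Phi_inv_apply \<beta>_def cell_def)
          qed
        qed
      qed
    qed
    ultimately show ?thesis by blast
  qed
  then have "finite {a,b} \<and> {a,b} \<subseteq> (UNIV::'a set) \<and> (\<forall>\<kappa> \<in> Cpow UNIV. \<exists>\<beta>. brick_data UNIV \<beta> \<and> canonical_on UNIV (transfer a b \<sigma> \<rho>) (cell {a,b} B \<kappa>) \<beta>)"
    by simp
  then show ?thesis unfolding locally_canonical_def by blast
qed

lemma transfer_in_BT_in:
  assumes ab: "a \<noteq> b" and g: "admissible \<sigma> \<rho>"
  shows "transfer a b \<sigma> \<rho> \<in> BT_in {a,b}"
proof (rule SV_local_imp_BT_in)
  show "transfer a b \<sigma> \<rho> \<in> SV"
    by (rule bij_locally_canonical_imp_SV[OF bij_transfer[OF ab g] locally_canonical_transfer[OF ab g]])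
  show "transfer a b \<sigma> \<rho> \<kappa> s = \<kappa> s" if "s \<notin> {a,b}" for \<kappa> s
    using that by (simp add: transfer_def Let_def)
  show "transfer a b \<sigma> \<rho> \<kappa> s = transfer a b \<sigma> \<rho> \<kappa>' s" if "\<forall>t\<in>{a,b}. \<kappa> t = \<kappa>' t" "s \<in> {a,b}" for \<kappa> \<kappa>' s
    using that by (auto simp: transfer_def Let_def)
qed


definition seq_stop :: "(cantor \<Rightarrow> nat) \<Rightarrow> (bool list \<Rightarrow> cantor \<Rightarrow> nat) \<Rightarrow> cantor \<Rightarrow> nat" where
  "seq_stop \<sigma> \<rho> z = \<sigma> z + \<rho> (stake (\<sigma> z) z) (sdrop (\<sigma> z) z)"

lemma stopping_time_const: "stopping_time (\<lambda>_. c)"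
  by (simp add: stopping_time_def)

lemma stake_sdrop_eq: "stake (k + m) y = stake (k + m) x \<Longrightarrow> stake m (sdrop k y) = stake m (sdrop k x)"
  by (simp add: stake_add)

lemma admissible_shift: "admissible \<sigma> \<rho> \<Longrightarrow> admissible (\<lambda>_. 0) (\<lambda>_. \<sigma>)"
  unfolding admissible_def by (auto simp: stopping_time_const) (meson add_leD1)

lemma stopping_time_seq_stop:
  assumes "admissible \<sigma> \<rho>"
  shows "stopping_time (seq_stop \<sigma> \<rho>)"
  unfolding stopping_time_def
proof (intro allI impI)
  fix x y assume a: "stake (seq_stop \<sigma> \<rho> x) y = stake (seq_stop \<sigma> \<rho> x) x"
  have s: "stopping_time \<sigma>" and r: "\<And>w. stopping_time (\<rho> w)"
    using assms by (auto simp: admissible_def)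
  define k where "k = \<sigma> x"
  define m where "m = \<rho> (stake k x) (sdrop k x)"
  have a': "stake (k + m) y = stake (k + m) x" using a by (simp add: seq_stop_def k_def m_def)
  have "stake k y = stake k x" using a' by (metis le_add1 stake_eq_prefix)
  then have sy: "\<sigma> y = k" using stopping_timeD[OF s, of x y] by (simp add: k_def)
  then have py: "stake (\<sigma> y) y = stake k x" using \<open>stake k y = stake k x\<close> by simp
  have "stake m (sdrop k y) = stake m (sdrop k x)" by (rule stake_sdrop_eq[OF a'])
  then have "\<rho> (stake k x) (sdrop k y) = m"
    using stopping_timeD[OF r, of "stake k x" "sdrop k x" "sdrop k y"] by (simp add: m_def)
  then show "seq_stop \<sigma> \<rho> y = seq_stop \<sigma> \<rho> x" using sy py by (simp add: seq_stop_def k_def m_def)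
qed

lemma admissible_seq:
  assumes g: "admissible \<sigma> \<rho>"
  shows "admissible (\<lambda>_. 0) (\<lambda>_. seq_stop \<sigma> \<rho>)"
proof -
  obtain B where B: "\<And>z y. \<sigma> z + \<rho> (stake (\<sigma> z) z) y \<le> B" using g by (auto simp: admissible_def)
  show ?thesis unfolding admissible_def using stopping_time_seq_stop[OF g] B
    by (auto simp: stopping_time_const seq_stop_def intro!: exI[of _ B])
qed

text \<open>A transfer from \<open>u\<close> to \<open>r\<close> routed through \<open>v\<close>: park the \<open>\<sigma>\<close>-prefix of \<open>r\<close> in front of \<open>v\<close>,
  transfer from \<open>u\<close> to \<open>v\<close>, and move the enlarged prefix back to \<open>r\<close>.\<close>
lemma transfer_via:
  fixes r v u :: 's
  assumes d: "r \<noteq> v" "v \<noteq> u" "r \<noteq> u" and g: "admissible \<sigma> \<rho>"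
  shows "transfer r u \<sigma> \<rho> =
    transfer r v (\<lambda>_. 0) (\<lambda>_. seq_stop \<sigma> \<rho>) \<circ> transfer v u \<sigma> \<rho> \<circ> transfer v r (\<lambda>_. 0) (\<lambda>_. \<sigma>)"
proof
  fix \<kappa> :: "'s \<Rightarrow> cantor"
  have s: "stopping_time \<sigma>" and rr: "\<And>w. stopping_time (\<rho> w)" using g by (auto simp: admissible_def)
  define x where "x = \<kappa> r"
  define y where "y = \<kappa> u"
  define w where "w = \<kappa> v"
  define k where "k = \<sigma> x"
  define p where "p = stake k x"
  define l where "l = \<rho> p y"
  define q where "q = stake l y"
  have lp: "length p = k" by (simp add: p_def)
  have lq: "length q = l" by (simp add: q_def)
  define A where "A = \<kappa>(v := cat p w, r := sdrop k x)"
  have park: "transfer v r (\<lambda>_. 0) (\<lambda>_. \<sigma>) \<kappa> = A"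
    by (simp add: transfer_def Let_def A_def x_def w_def k_def p_def)
  have sA: "\<sigma> (A v) = k"
    using d stopping_time_cat_prefix[OF s, of x p w] lp by (simp add: A_def p_def k_def)
  have stA: "stake k (A v) = p" using d lp by (simp add: A_def)
  have Au: "A u = y" using d by (simp add: A_def y_def)
  define B where "B = A(v := cat (p @ q) w, u := sdrop l y)"
  have transfer_vu: "transfer v u \<sigma> \<rho> A = B"
    using lp d by (simp add: transfer_def Let_def B_def sA stA Au l_def[symmetric] q_def[symmetric] cat_append) (simp add: A_def)
  have sB: "seq_stop \<sigma> \<rho> (B v) = k + l"
  proof -
    have Bv: "B v = cat (p @ q) w" using d by (simp add: B_def)
    have a1: "\<sigma> (B v) = k" unfolding Bv cat_append
      using stopping_time_cat_prefix[OF s, of x p "cat q w"] lp by (simp add: p_def k_def)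
    have a2: "stake k (B v) = p" unfolding Bv cat_append using lp by simp
    have a3: "sdrop k (B v) = cat q w" unfolding Bv cat_append using lp by simp
    have a4: "\<rho> p (cat q w) = l" unfolding q_def l_def by (rule stopping_time_cat[OF rr])
    show ?thesis by (simp add: seq_stop_def a1 a2 a3 a4)
  qed
  have Bv: "B v = cat (p @ q) w" using d by (simp add: B_def)
  have Br: "B r = sdrop k x" using d by (simp add: B_def A_def)
  have unpark: "transfer r v (\<lambda>_. 0) (\<lambda>_. seq_stop \<sigma> \<rho>) B = B(r := cat (p @ q) (sdrop k x), v := w)"
  proof -
    have e1: "stake (k + l) (B v) = p @ q" unfolding Bv
      using lp lq by (metis length_append stake_cat_len)
    have e2: "sdrop (k + l) (B v) = w" unfolding Bv
      using lp lq by (metis length_append sdrop_cat_len)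
    show ?thesis by (simp add: transfer_def Let_def sB e1 e2 Br del: sdrop_sdrop)
  qed
  have direct: "transfer r u \<sigma> \<rho> \<kappa> = \<kappa>(r := cat (p @ q) (sdrop k x), u := sdrop l y)"
    by (simp add: transfer_def Let_def x_def[symmetric] y_def[symmetric] k_def[symmetric] p_def[symmetric] l_def[symmetric] q_def[symmetric])
  show "transfer r u \<sigma> \<rho> \<kappa> = (transfer r v (\<lambda>_. 0) (\<lambda>_. seq_stop \<sigma> \<rho>) \<circ> transfer v u \<sigma> \<rho>
      \<circ> transfer v r (\<lambda>_. 0) (\<lambda>_. \<sigma>)) \<kappa>"
    using d by (simp add: park transfer_vu unpark direct) (auto simp: fun_eq_iff B_def A_def w_def)
qed


lemma bij_gen_group: "f \<in> gen_group A \<Longrightarrow> (\<forall>a \<in> A. bij a) \<Longrightarrow> bij f"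
  by (induction rule: gen_group.induct) (auto intro: bij_comp bij_imp_bij_inv)

lemma inv_in_gen_group:
  assumes "f \<in> gen_group A" "\<forall>a \<in> A. bij a"
  shows "inv f \<in> gen_group A"
  using assms
proof (induction rule: gen_group.induct)
  case gen_id
  then show ?case
    by (metis inv_id gen_group.gen_id)
next
  case (gen_base a)
  then show ?case
    by (simp add: gen_group.gen_inv)
next
  case (gen_inv a)
  then show ?case
    by (simp add: inv_inv_eq gen_group.gen_base)
next
  case (gen_comp x y)
  then have "inv (x \<circ> y) = inv y \<circ> inv x"
    using bij_gen_group by (blast intro: o_inv_distrib)
  moreover have "inv y \<circ> inv x \<in> gen_group A"
    using gen_comp by (blast intro: gen_group.gen_comp)
  ultimately show ?case
    by (simp only:)
qed

lemma gen_group_subset_SV: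
  assumes "A \<subseteq> SV"
  shows "gen_group A \<subseteq> SV"
proof
  fix f assume "f \<in> gen_group A"
  then show "f \<in> SV"
  proof (induction rule: gen_group.induct)
    case gen_id
    show ?case
      by (rule id_in_SV)
  next
    case (gen_base a)
    then show ?case
      using assms by blast
  next
    case (gen_inv a)
    then show ?case
      using assms SV_inv by blast
  next
    case (gen_comp x y)
    then show ?case
      using SV_comp by blast
  qed
qed

lemma simple_graph_edge_neq: "simple_graph_edges E \<Longrightarrow> {x, y} \<in> E \<Longrightarrow> x \<noteq> y"
  unfolding simple_graph_edges_def by fastforce

lemma transfer_in_gen_group_edge:
  assumes "{a, b} \<in> E" "a \<noteq> b" "admissible \<sigma> \<rho>"
  shows "transfer a b \<sigma> \<rho> \<in> gen_group (\<Union>e \<in> E. BT_in e)"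
proof (rule gen_group.gen_base)
  have "transfer a b \<sigma> \<rho> \<in> BT_in {a, b}"
    using assms(2,3) by (rule transfer_in_BT_in)
  then show "transfer a b \<sigma> \<rho> \<in> (\<Union>e \<in> E. BT_in e)"
    using assms(1) by blast
qed

lemma transfer_in_gen_group:
  assumes E: "simple_graph_edges E" and conn: "connected_graph E"
    and "a \<noteq> b" "admissible \<sigma> \<rho>"
  shows "transfer a b \<sigma> \<rho> \<in> gen_group (\<Union>e \<in> E. BT_in e)"
proof -
  let ?G = "gen_group (\<Union>e \<in> E. BT_in e)"
  have "(a, b) \<in> {(x, y). {x, y} \<in> E}\<^sup>*"
    using conn by (simp add: connected_graph_def)
  \<comment> \<open>induction along a path from \<open>a\<close>, in both directions at once\<close>
  then have "\<forall>\<sigma> \<rho>. a \<noteq> b \<longrightarrow> admissible \<sigma> \<rho> \<longrightarrow> transfer a b \<sigma> \<rho> \<in> ?G \<and> transfer b a \<sigma> \<rho> \<in> ?G"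
  proof (induction b rule: rtrancl_induct)
    case base
    then show ?case by simp
  next
    case (step b c)
    have bc: "{b, c} \<in> E" "{c, b} \<in> E"
      using step.hyps(2) by (simp_all add: insert_commute)
    have "b \<noteq> c"
      using simple_graph_edge_neq[OF E bc(1)] .
    have edge: "transfer b c \<sigma> \<rho> \<in> ?G" "transfer c b \<sigma> \<rho> \<in> ?G" if "admissible \<sigma> \<rho>" for \<sigma> \<rho>
      using transfer_in_gen_group_edge[OF bc(1) \<open>b \<noteq> c\<close> that]
        transfer_in_gen_group_edge[OF bc(2) \<open>b \<noteq> c\<close>[symmetric] that] .
    show ?case
    proof (intro allI impI)
      fix \<sigma> \<rho> assume "a \<noteq> c" and adm: "admissible \<sigma> \<rho>"
      show "transfer a c \<sigma> \<rho> \<in> ?G \<and> transfer c a \<sigma> \<rho> \<in> ?G"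
      proof (cases "a = b")
        case True
        then show ?thesis
          using edge[OF adm] by simp
      next
        case False
        then have IH: "\<And>\<sigma> \<rho>. admissible \<sigma> \<rho> \<Longrightarrow> transfer a b \<sigma> \<rho> \<in> ?G \<and> transfer b a \<sigma> \<rho> \<in> ?G"
          using step.IH by blast
        have adm': "admissible (\<lambda>_. 0) (\<lambda>_. \<sigma>)" "admissible (\<lambda>_. 0) (\<lambda>_. seq_stop \<sigma> \<rho>)"
          using adm by (rule admissible_shift, rule admissible_seq)
        have "transfer a c \<sigma> \<rho> =
            transfer a b (\<lambda>_. 0) (\<lambda>_. seq_stop \<sigma> \<rho>) \<circ> transfer b c \<sigma> \<rho> \<circ> transfer b a (\<lambda>_. 0) (\<lambda>_. \<sigma>)"
          using False \<open>b \<noteq> c\<close> \<open>a \<noteq> c\<close> adm by (rule transfer_via)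
        moreover have "transfer c a \<sigma> \<rho> =
            transfer c b (\<lambda>_. 0) (\<lambda>_. seq_stop \<sigma> \<rho>) \<circ> transfer b a \<sigma> \<rho> \<circ> transfer b c (\<lambda>_. 0) (\<lambda>_. \<sigma>)"
          using False \<open>b \<noteq> c\<close> \<open>a \<noteq> c\<close> adm by (intro transfer_via) auto
        moreover have "transfer a b (\<lambda>_. 0) (\<lambda>_. seq_stop \<sigma> \<rho>) \<circ> transfer b c \<sigma> \<rho>
            \<circ> transfer b a (\<lambda>_. 0) (\<lambda>_. \<sigma>) \<in> ?G"
          using IH[OF adm'(1)] IH[OF adm'(2)] edge[OF adm] by (blast intro: gen_group.gen_comp)
        moreover have "transfer c b (\<lambda>_. 0) (\<lambda>_. seq_stop \<sigma> \<rho>) \<circ> transfer b a \<sigma> \<rho>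
            \<circ> transfer b c (\<lambda>_. 0) (\<lambda>_. \<sigma>) \<in> ?G"
          using IH[OF adm] edge[OF adm'(1)] edge[OF adm'(2)] by (blast intro: gen_group.gen_comp)
        ultimately show ?thesis
          by (simp only:)
      qed
    qed
  qed
  then show ?thesis
    using assms by blast
qed

section \<open>Reduction to a single coordinate\<close>

text \<open>\<open>gather r K A c us\<close> reads the prefix \<open>P\<close> of length \<open>K\<close> of coordinate \<open>r\<close> and then moves, for each
  \<open>u\<close> in \<open>us\<close> in turn, the first \<open>c u P\<close> digits of coordinate \<open>u\<close> into coordinate \<open>r\<close>; they are
  inserted behind the first \<open>K + A P\<close> digits of \<open>r\<close>, \<open>A P\<close> counting what has been inserted so far.\<close>
fun gather ::
  "'s \<Rightarrow> nat \<Rightarrow> (bool list \<Rightarrow> nat) \<Rightarrow> ('s \<Rightarrow> bool list \<Rightarrow> nat) \<Rightarrow> 's list \<Rightarrow> ('s \<Rightarrow> cantor) \<Rightarrow> 's \<Rightarrow> cantor"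
  where
    "gather r K A c [] = id"
  | "gather r K A c (u # us) =
      gather r K (\<lambda>P. A P + c u P) c us \<circ> transfer r u (\<lambda>z. K + A (stake K z)) (\<lambda>w _. c u (take K w))"

lemma admissible_gather_step: "admissible (\<lambda>z. K + A (stake K z)) (\<lambda>w _. d (take K w))"
proof -
  have "stopping_time (\<lambda>z. K + A (stake K z))"
    unfolding stopping_time_def
  proof (intro allI impI)
    fix x y assume "stake (K + A (stake K x)) y = stake (K + A (stake K x)) x"
    then have "stake K y = stake K x"
      by (metis le_add1 stake_eq_prefix)
    then show "K + A (stake K y) = K + A (stake K x)"
      by simp
  qed
  moreover note stopping_time_const
  moreover
  \<comment> \<open>only the finitely many prefixes of length \<open>K\<close> matter\<close>
  have "K + A (stake K z) + d (take K (stake (K + A (stake K z)) z))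
      \<le> K + (\<Sum>P \<in> {P :: bool list. length P = K}. A P + d P)" for z
  proof -
    have "finite {P :: bool list. length P = K}"
      using finite_lists_length_eq[of "UNIV :: bool set" K] by simp
    then have "A (stake K z) + d (stake K z) \<le> (\<Sum>P \<in> {P :: bool list. length P = K}. A P + d P)"
      by (intro member_le_sum) auto
    then show ?thesis
      by (simp add: take_stake)
  qed
  ultimately show ?thesis
    unfolding admissible_def by blast
qed

lemma gather_apply:
  assumes "distinct us" "r \<notin> set us"
  shows "gather r K A c us x r =
      cat (stake (K + A (stake K (x r))) (x r) @ concat (map (\<lambda>u. stake (c u (stake K (x r))) (x u)) us))
        (sdrop (K + A (stake K (x r))) (x r))
    \<and> (\<forall>s. s \<noteq> r \<longrightarrow> gather r K A c us x s = (if s \<in> set us then sdrop (c s (stake K (x r))) (x s) else x s))"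
  using assms
proof (induction us arbitrary: A x)
  case Nil
  then show ?case by simp
next
  case (Cons u us)
  define P where "P = stake K (x r)"
  define k where "k = K + A P"
  define x' where "x' = transfer r u (\<lambda>z. K + A (stake K z)) (\<lambda>w _. c u (take K w)) x"
  have "u \<noteq> r"
    using Cons.prems by auto
  have take: "take K (stake k (x r)) = P"
    by (simp add: P_def k_def take_stake)
  have x'_r: "x' r = cat (stake k (x r) @ stake (c u P) (x u)) (sdrop k (x r))"
    and x'_u: "x' u = sdrop (c u P) (x u)"
    and x'_s: "\<And>s. s \<noteq> r \<Longrightarrow> s \<noteq> u \<Longrightarrow> x' s = x s"
    using \<open>u \<noteq> r\<close> by (simp_all add: x'_def transfer_def Let_def P_def[symmetric] k_def[symmetric] take)
  have len: "length (stake k (x r) @ stake (c u P) (x u)) = K + (A P + c u P)"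
    by (simp add: k_def)
  have P: "stake K (x' r) = P"
    by (simp add: x'_r k_def P_def cat_append take_stake)
  have stake_eq: "stake (K + (A P + c u P)) (x' r) = stake k (x r) @ stake (c u P) (x u)"
    and sdrop_eq: "sdrop (K + (A P + c u P)) (x' r) = sdrop k (x r)"
    unfolding x'_r by (metis len stake_cat_len, metis len sdrop_cat_len)
  have "distinct us" "r \<notin> set us"
    using Cons.prems by auto
  note IH = Cons.IH[OF this, of "\<lambda>P. A P + c u P" x', unfolded P stake_eq sdrop_eq]
  have IH1: "gather r K (\<lambda>P. A P + c u P) c us x' r =
      cat (stake k (x r) @ stake (c u P) (x u) @ concat (map (\<lambda>v. stake (c v P) (x' v)) us)) (sdrop k (x r))"
    using conjunct1[OF IH] by simp
  have IH2: "gather r K (\<lambda>P. A P + c u P) c us x' s = (if s \<in> set us then sdrop (c s P) (x' s) else x' s)"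
    if "s \<noteq> r" for s
    using conjunct2[OF IH] that by blast
  have map_eq: "map (\<lambda>v. stake (c v P) (x' v)) us = map (\<lambda>v. stake (c v P) (x v)) us"
  proof (rule map_cong[OF refl])
    fix v assume "v \<in> set us"
    then have "v \<noteq> r" "v \<noteq> u"
      using Cons.prems by auto
    then show "stake (c v P) (x' v) = stake (c v P) (x v)"
      by (simp add: x'_s)
  qed
  have eq: "gather r K A c (u # us) x = gather r K (\<lambda>P. A P + c u P) c us x'"
    by (simp add: x'_def)
  have "gather r K A c (u # us) x r =
      cat (stake k (x r) @ concat (map (\<lambda>v. stake (c v P) (x v)) (u # us))) (sdrop k (x r))"
    unfolding eq IH1 map_eq by simp
  moreover have "gather r K A c (u # us) x s =
      (if s \<in> set (u # us) then sdrop (c s P) (x s) else x s)" if "s \<noteq> r" for s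
    unfolding eq IH2[OF that] using that x'_u x'_s Cons.prems by (cases "s = u") auto
  ultimately show ?case
    by (simp add: P_def k_def)
qed

lemma gather_apply_root:
  assumes "distinct us" "r \<notin> set us"
  shows "gather r K A c us x r =
    cat (stake (K + A (stake K (x r))) (x r) @ concat (map (\<lambda>u. stake (c u (stake K (x r))) (x u)) us))
      (sdrop (K + A (stake K (x r))) (x r))"
  using gather_apply[OF assms] by (rule conjunct1)

lemma gather_apply_other:
  assumes "distinct us" "r \<notin> set us" "s \<noteq> r"
  shows "gather r K A c us x s = (if s \<in> set us then sdrop (c s (stake K (x r))) (x s) else x s)"
  using conjunct2[OF gather_apply[OF assms(1,2)], rule_format, OF assms(3)] .

lemma gather_in_gen_group:
  assumes "\<And>u \<sigma> \<rho>. u \<noteq> r \<Longrightarrow> admissible \<sigma> \<rho> \<Longrightarrow> transfer r u \<sigma> \<rho> \<in> gen_group G"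
  shows "r \<notin> set us \<Longrightarrow> gather r K A c us \<in> gen_group G"
proof (induction us arbitrary: A)
  case Nil
  show ?case
    by (simp only: gather.simps gen_group.gen_id)
next
  case (Cons u us)
  then have "gather r K (\<lambda>P. A P + c u P) c us \<in> gen_group G"
    by simp
  moreover have "transfer r u (\<lambda>z. K + A (stake K z)) (\<lambda>w _. c u (take K w)) \<in> gen_group G"
    using Cons.prems by (intro assms admissible_gather_step) auto
  ultimately show ?case
    by (simp only: gather.simps) (rule gen_group.gen_comp)
qed

lemma locally_canonical_normal_form:
  fixes h :: "('s \<Rightarrow> cantor) \<Rightarrow> 's \<Rightarrow> cantor"
  assumes "locally_canonical UNIV h" "finite V"
  obtains U L M \<beta> where "finite U" "V \<subseteq> U"
    and "\<And>x s. length (\<beta> (cell U L x) s) \<le> M"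
    and "\<And>x s. s \<in> U \<Longrightarrow> h x s = cat (\<beta> (cell U L x) s) (sdrop L (x s))"
    and "\<And>x s. s \<notin> U \<Longrightarrow> h x s = x s"
proof -
  from assms(1) obtain U\<^sub>0 L where U\<^sub>0: "finite U\<^sub>0"
    and ex: "\<forall>\<kappa>. \<exists>\<beta>. brick_data UNIV \<beta> \<and> canonical_on UNIV h (cell U\<^sub>0 L \<kappa>) \<beta>"
    unfolding locally_canonical_def by auto
  define image where "image G = (SOME \<beta>. brick_data UNIV \<beta> \<and> canonical_on UNIV h G \<beta>)" for G
  have image: "brick_data UNIV (image (cell U\<^sub>0 L x)) \<and> canonical_on UNIV h (cell U\<^sub>0 L x) (image (cell U\<^sub>0 L x))"
    for x
  proof -
    have "\<exists>\<beta>. brick_data UNIV \<beta> \<and> canonical_on UNIV h (cell U\<^sub>0 L x) \<beta>"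
      using ex by blast
    then show ?thesis
      unfolding image_def by (rule someI_ex)
  qed
  define cells where "cells = range (cell U\<^sub>0 L)"
  define S where "S = (\<Union>G \<in> cells. {s. image G s \<noteq> []})"
  have "finite cells"
    unfolding cells_def by (rule finite_cells[OF U\<^sub>0])
  moreover have "finite {s. image G s \<noteq> []}" if "G \<in> cells" for G
    using that image by (auto simp: cells_def brick_data_def)
  ultimately have "finite S"
    unfolding S_def by blast
  define M\<^sub>0 where "M\<^sub>0 = Max ((\<lambda>(G, s). length (image G s)) ` (cells \<times> S))"
  have M\<^sub>0: "length (image (cell U\<^sub>0 L x) s) \<le> M\<^sub>0" for x s
  proof (cases "s \<in> S")
    case True
    then show ?thesis
      unfolding M\<^sub>0_def using \<open>finite cells\<close> \<open>finite S\<close>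
      by (intro Max_ge) (auto simp: cells_def)
  next
    case False
    then show ?thesis
      by (simp add: S_def cells_def)
  qed
  define U where "U = V \<union> U\<^sub>0 \<union> S"
  define \<beta> where "\<beta> G = canonical_image (\<lambda>s. if s \<in> U\<^sub>0 then G s else []) (image (\<lambda>s. if s \<in> U\<^sub>0 then G s else [])) G"
    for G
  have coarse: "(\<lambda>s. if s \<in> U\<^sub>0 then cell U L x s else []) = cell U\<^sub>0 L x" for x
    by (auto simp: cell_def U_def)
  have \<beta>_cell: "\<beta> (cell U L x) = canonical_image (cell U\<^sub>0 L x) (image (cell U\<^sub>0 L x)) (cell U L x)" for x
    by (simp add: \<beta>_def coarse)
  have "canonical_on UNIV h (cell U L x) (\<beta> (cell U L x))" for x
    unfolding \<beta>_cell using image by (intro canonical_on_refine data_prefix_cell) (auto simp: U_def)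
  then have h: "h x = Phi (\<beta> (cell U L x)) (Phi_inv (cell U L x) x)" for x
    using mem_brick_cell[of x UNIV U L] by (simp add: canonical_on_def)
  show ?thesis
  proof
    show "finite U" "V \<subseteq> U"
      using assms(2) U\<^sub>0 \<open>finite S\<close> by (auto simp: U_def)
    show "length (\<beta> (cell U L x) s) \<le> M\<^sub>0 + L" for x s
      using M\<^sub>0[of x s] unfolding \<beta>_cell by (simp add: canonical_image_def cell_def)
    show "h x s = cat (\<beta> (cell U L x) s) (sdrop L (x s))" if "s \<in> U" for x s
      using that by (simp add: h Phi_apply Phi_inv_apply cell_def)
    show "h x s = x s" if "s \<notin> U" for x s
    proof -
      have "cell U\<^sub>0 L x \<in> cells" "s \<notin> S"
        using that by (simp_all add: cells_def U_def)
      then have "image (cell U\<^sub>0 L x) s = []"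
        by (simp add: S_def)
      moreover have "cell U L x s = []"
        using that by (simp add: cell_def)
      ultimately show ?thesis
        by (simp add: h \<beta>_cell canonical_image_def Phi_apply Phi_inv_apply)
    qed
  qed
qed

definition cell_code :: "'s list \<Rightarrow> nat \<Rightarrow> ('s \<Rightarrow> cantor) \<Rightarrow> bool list" where
  "cell_code us L x = concat (map (\<lambda>u. stake L (x u)) us)"

lemma length_cell_code [simp]: "length (cell_code us L x) = length us * L"
  by (induction us) (simp_all add: cell_code_def)

lemma cell_code_eq_imp_cell_eq:
  assumes "cell_code us L x = cell_code us L y"
  shows "cell (set us) L x = cell (set us) L y"
proof -
  have "map (\<lambda>u. stake L (x u)) us = map (\<lambda>u. stake L (y u)) us"
    using assms unfolding cell_code_def by (subst (asm) concat_eq_concat_iff) (auto simp: set_zip)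
  then show ?thesis
    by (auto simp: cell_def fun_eq_iff)
qed

lemma cat_eq_cat_iff: "length w = length w' \<Longrightarrow> cat w z = cat w' z' \<longleftrightarrow> w = w' \<and> z = z'"
  by (metis sdrop_cat_len stake_cat_len)

text \<open>\<open>encode r us L n\<close> first moves the first \<open>L\<close> digits of every \<open>u \<in> us\<close> into coordinate \<open>r\<close>, so
  that \<open>r\<close> starts with the code \<open>c\<close> of the cell of \<open>x\<close>; then it moves \<open>n u c\<close> further digits of
  every \<open>u\<close> behind it.\<close>
definition encode :: "'s \<Rightarrow> 's list \<Rightarrow> nat \<Rightarrow> ('s \<Rightarrow> bool list \<Rightarrow> nat) \<Rightarrow> ('s \<Rightarrow> cantor) \<Rightarrow> 's \<Rightarrow> cantor"
  where "encode r us L n = gather r (Suc (length us) * L) (\<lambda>_. 0) n us \<circ> gather r L (\<lambda>_. 0) (\<lambda>_ _. L) us"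

lemma encode_in_gen_group:
  assumes "\<And>u \<sigma> \<rho>. u \<noteq> r \<Longrightarrow> admissible \<sigma> \<rho> \<Longrightarrow> transfer r u \<sigma> \<rho> \<in> gen_group G" "r \<notin> set us"
  shows "encode r us L n \<in> gen_group G"
  unfolding encode_def using assms by (blast intro: gather_in_gen_group gen_group.gen_comp)

lemma encode_apply:
  assumes us: "distinct us" "r \<notin> set us"
  shows "encode r us L n x r = cat (cell_code (r # us) L x
      @ concat (map (\<lambda>u. stake (n u (cell_code (r # us) L x)) (sdrop L (x u))) us)) (sdrop L (x r))"
    and "s \<noteq> r \<Longrightarrow> encode r us L n x s =
      (if s \<in> set us then sdrop (n s (cell_code (r # us) L x)) (sdrop L (x s)) else x s)"
proof -
  define c where "c = cell_code (r # us) L x"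
  define K where "K = Suc (length us) * L"
  define x' where "x' = gather r L (\<lambda>_. 0) (\<lambda>_ _. L) us x"
  have x'_other: "x' s = (if s \<in> set us then sdrop L (x s) else x s)" if "s \<noteq> r" for s
    using gather_apply_other[OF us that] by (simp add: x'_def)
  have "x' r = cat c (sdrop L (x r))"
    using gather_apply_root[OF us, of L "\<lambda>_. 0" "\<lambda>_ _. L" x] by (simp add: x'_def c_def cell_code_def)
  then have prefix: "stake K (x' r) = c" and rest: "sdrop K (x' r) = sdrop L (x r)"
    by (simp_all add: K_def c_def)
  have encode: "encode r us L n x = gather r K (\<lambda>_. 0) n us x'"
    by (simp add: encode_def K_def x'_def)
  have stored: "map (\<lambda>u. stake (n u c) (x' u)) us = map (\<lambda>u. stake (n u c) (sdrop L (x u))) us"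
  proof (rule map_cong[OF refl])
    fix u assume "u \<in> set us"
    moreover have "u \<noteq> r"
      using \<open>u \<in> set us\<close> us by auto
    ultimately show "stake (n u c) (x' u) = stake (n u c) (sdrop L (x u))"
      by (simp add: x'_other)
  qed
  have "gather r K (\<lambda>_. 0) n us x' r = cat (stake (K + 0) (x' r)
      @ concat (map (\<lambda>u. stake (n u (stake K (x' r))) (x' u)) us)) (sdrop (K + 0) (x' r))"
    by (rule gather_apply_root[OF us])
  then have "gather r K (\<lambda>_. 0) n us x' r =
      cat (c @ concat (map (\<lambda>u. stake (n u c) (sdrop L (x u))) us)) (sdrop L (x r))"
    unfolding add_0_right prefix rest stored .
  then show "encode r us L n x r = cat (cell_code (r # us) L x
      @ concat (map (\<lambda>u. stake (n u (cell_code (r # us) L x)) (sdrop L (x u))) us)) (sdrop L (x r))"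
    unfolding encode c_def .
  show "encode r us L n x s =
      (if s \<in> set us then sdrop (n s (cell_code (r # us) L x)) (sdrop L (x s)) else x s)" if "s \<noteq> r"
    using gather_apply_other[OF us that] x'_other[OF that] prefix
    unfolding encode by (simp add: c_def)
qed

lemma encode_root_eqD:
  assumes us: "distinct us" "r \<notin> set us"
    and eq: "encode r us L n x r = encode r us L n x' r"
  shows "cell_code (r # us) L x = cell_code (r # us) L x'"
    and "sdrop L (x r) = sdrop L (x' r)"
    and "u \<in> set us \<Longrightarrow> stake (n u (cell_code (r # us) L x)) (sdrop L (x u))
      = stake (n u (cell_code (r # us) L x)) (sdrop L (x' u))"
proof -
  let ?c = "cell_code (r # us) L x" and ?c' = "cell_code (r # us) L x'"
  define Q where "Q y = map (\<lambda>u. stake (n u ?c) (sdrop L (y u))) us" for y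
  have eq': "cat (?c @ concat (map (\<lambda>u. stake (n u ?c) (sdrop L (x u))) us)) (sdrop L (x r)) =
      cat (?c' @ concat (map (\<lambda>u. stake (n u ?c') (sdrop L (x' u))) us)) (sdrop L (x' r))"
    using eq unfolding encode_apply(1)[OF us] .
  then show code: "?c = ?c'"
    unfolding cat_append by (simp add: cat_eq_cat_iff)
  have rest: "cat (concat (Q x)) (sdrop L (x r)) = cat (concat (Q x')) (sdrop L (x' r))"
    using eq'[folded code] unfolding cat_append Q_def by (simp add: cat_eq_cat_iff)
  have "length (concat (Q x)) = length (concat (Q x'))"
    unfolding Q_def by (simp add: length_concat o_def)
  then have "concat (Q x) = concat (Q x')" and "sdrop L (x r) = sdrop L (x' r)"
    using rest by (simp_all add: cat_eq_cat_iff)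
  then show "sdrop L (x r) = sdrop L (x' r)"
    by simp
  have "Q x = Q x'"
    using \<open>concat (Q x) = concat (Q x')\<close> unfolding Q_def
    by (subst (asm) concat_eq_concat_iff) (auto simp: set_zip)
  then show "stake (n u ?c) (sdrop L (x u)) = stake (n u ?c) (sdrop L (x' u))" if "u \<in> set us"
    using that unfolding Q_def map_eq_conv by blast
qed

text \<open>Conjugating by products of transfers into \<open>r\<close>, every element of \<open>SV\<close> becomes a map that only
  rewrites coordinate \<open>r\<close>: \<open>Y\<close> moves the digits that determine the local behaviour of \<open>h\<close> into \<open>r\<close>,
  together with exactly as many further digits of each other coordinate as \<open>W\<close> will move back out.\<close>
lemma reduce_to_one_coordinate:
  fixes h :: "('s \<Rightarrow> cantor) \<Rightarrow> 's \<Rightarrow> cantor"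
  assumes h: "locally_canonical UNIV h"
    and transfers: "\<And>u \<sigma> \<rho>. u \<noteq> r \<Longrightarrow> admissible \<sigma> \<rho> \<Longrightarrow> transfer r u \<sigma> \<rho> \<in> gen_group G"
  obtains Y W where "Y \<in> gen_group G" "W \<in> gen_group G"
    and "\<And>x s. s \<noteq> r \<Longrightarrow> W (h x) s = Y x s"
    and "\<And>x x'. Y x r = Y x' r \<Longrightarrow> W (h x) r = W (h x') r"
proof -
  have "finite {r}" by simp
  obtain U L M \<beta> where U: "finite U" "{r} \<subseteq> U"
    and bound: "\<And>x s. length (\<beta> (cell U L x) s) \<le> M"
    and h_in: "\<And>x s. s \<in> U \<Longrightarrow> h x s = cat (\<beta> (cell U L x) s) (sdrop L (x s))"
    and h_out: "\<And>x s. s \<notin> U \<Longrightarrow> h x s = x s"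
    by (rule locally_canonical_normal_form[OF h \<open>finite {r}\<close>]) blast
  obtain us where "distinct us" "set us = U - {r}"
    using finite_distinct_list[of "U - {r}"] U by blast
  then have us: "distinct us" "r \<notin> set us" and U_eq: "set (r # us) = U"
    using U by auto
  define code where "code x = cell_code (r # us) L x" for x
  \<comment> \<open>the code of a cell determines the cell, hence the local behaviour of \<open>h\<close>\<close>
  define dec where "dec P = \<beta> (cell U L (SOME y. code y = P))" for P
  have dec: "dec (code x) = \<beta> (cell U L x)" for x
  proof -
    have "code (SOME y. code y = code x) = code x"
      using someI[of "\<lambda>y. code y = code x" x] by simp
    then have "cell (set (r # us)) L (SOME y. code y = code x) = cell (set (r # us)) L x"
      unfolding code_def by (rule cell_code_eq_imp_cell_eq)
    then show ?thesis
      unfolding dec_def U_eq by simp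
  qed
  define n where "n u P = M - length (dec P u)" for u P
  define Y where "Y = encode r us L n"
  define W where "W = gather r 0 (\<lambda>_. 0) (\<lambda>_ _. M) us"
  have W_r: "W z r = cat (concat (map (\<lambda>u. stake M (z u)) us)) (z r)" for z
    using gather_apply_root[OF us] by (simp add: W_def)
  have W_s: "W z s = (if s \<in> set us then sdrop M (z s) else z s)" if "s \<noteq> r" for z s
    using gather_apply_other[OF us that] by (simp add: W_def)
  have h_us: "h y u = cat (\<beta> (cell U L y) u) (sdrop L (y u))" if "u \<in> set us" for y u
    using that U_eq h_in by auto
  show ?thesis
  proof
    show "Y \<in> gen_group G" "W \<in> gen_group G"
      unfolding Y_def W_def using transfers us
      by (blast intro: encode_in_gen_group gather_in_gen_group)+
    show "W (h x) s = Y x s" if "s \<noteq> r" for x s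
    proof (cases "s \<in> set us")
      case True
      then show ?thesis
        using that bound[of x s] h_us[OF True]
        by (simp add: W_s Y_def encode_apply(2)[OF us] sdrop_cat n_def dec[unfolded code_def])
    next
      case False
      then have "s \<notin> U"
        using that U_eq by auto
      then show ?thesis
        using False that h_out W_s by (simp add: Y_def encode_apply(2)[OF us])
    qed
    show "W (h x) r = W (h x') r" if "Y x r = Y x' r" for x x'
    proof -
      note same = encode_root_eqD[OF us that[unfolded Y_def]]
      have cells: "cell U L x = cell U L x'"
        using cell_code_eq_imp_cell_eq[OF same(1)] U_eq by simp
      \<comment> \<open>each coordinate \<open>u\<close> contributes \<open>\<beta> u\<close> followed by the digits stored by \<open>Y\<close>\<close>
      have stake_h: "stake M (h y u) = \<beta> (cell U L y) u @ stake (n u (code y)) (sdrop L (y u))"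
        if "u \<in> set us" for y u
        using bound[of y u] h_us[OF that] by (simp add: stake_cat n_def dec)
      have heads: "map (\<lambda>u. stake M (h x u)) us = map (\<lambda>u. stake M (h x' u)) us"
      proof (rule map_cong[OF refl])
        fix u assume u: "u \<in> set us"
        have "stake (n u (code x')) (sdrop L (x u)) = stake (n u (code x')) (sdrop L (x' u))"
          using same(3)[OF u] unfolding code_def same(1) .
        then show "stake M (h x u) = stake M (h x' u)"
          unfolding stake_h[OF u] cells code_def same(1) by simp
      qed
      have "h x r = h x' r"
        using U h_in same(2) cells by simp
      with heads show ?thesis
        unfolding W_r by (simp only:)
    qed
  qed
qed

lemma SV_fixing_other_coordinates_imp_BT_in:
  assumes "f \<in> SV" "r \<in> T"
    and others: "\<And>\<kappa> s. s \<noteq> r \<Longrightarrow> f \<kappa> s = \<kappa> s"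
    and root: "\<And>\<kappa> \<kappa>'. \<kappa> r = \<kappa>' r \<Longrightarrow> f \<kappa> r = f \<kappa>' r"
  shows "f \<in> BT_in T"
proof (rule SV_local_imp_BT_in[OF assms(1)])
  show "f \<kappa> s = \<kappa> s" if "s \<notin> T" for \<kappa> s
    using that assms(2) by (intro others) auto
  show "f \<kappa> s = f \<kappa>' s" if "\<forall>t \<in> T. \<kappa> t = \<kappa>' t" "s \<in> T" for \<kappa> \<kappa>' s
  proof (cases "s = r")
    case True
    then show ?thesis
      using that assms(2) root[of \<kappa> \<kappa>'] by simp
  next
    case False
    then show ?thesis
      using that others[OF False, of \<kappa>] others[OF False, of \<kappa>'] by simp
  qed
qed

lemma SV_subset_gen_group:
  fixes E :: "'s set set"
  assumes E: "simple_graph_edges E" and conn: "connected_graph E" and two: "\<exists>a b :: 's. a \<noteq> b"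
  shows "SV \<subseteq> gen_group (\<Union>e \<in> E. BT_in e)"
proof
  fix h :: "('s \<Rightarrow> cantor) \<Rightarrow> 's \<Rightarrow> cantor"
  assume h: "h \<in> SV"
  let ?G = "gen_group (\<Union>e \<in> E. BT_in e)"
  obtain r b :: 's where "r \<noteq> b"
    using two by blast
  have "(r, b) \<in> {(x, y). {x, y} \<in> E}\<^sup>*"
    using conn by (simp add: connected_graph_def)
  then obtain c where "{r, c} \<in> E"
    using \<open>r \<noteq> b\<close> by (cases rule: converse_rtranclE) auto
  obtain Y W where Y: "Y \<in> ?G" and W: "W \<in> ?G"
    and others: "\<And>x s. s \<noteq> r \<Longrightarrow> W (h x) s = Y x s"
    and root: "\<And>x x'. Y x r = Y x' r \<Longrightarrow> W (h x) r = W (h x') r"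
  proof (rule reduce_to_one_coordinate[OF BT_imp_locally_canonical[OF h]])
    show "transfer r u \<sigma> \<rho> \<in> ?G" if "u \<noteq> r" "admissible \<sigma> \<rho>" for u \<sigma> \<rho>
      using that by (intro transfer_in_gen_group[OF E conn]) auto
  qed blast
  have generators: "\<forall>a \<in> (\<Union>e \<in> E. BT_in e). bij a"
    using BT_in_imp_SV SV_imp_bij by blast
  have SV: "?G \<subseteq> SV"
    using BT_in_imp_SV by (intro gen_group_subset_SV) blast
  then have "bij Y" "bij W" "inv Y \<in> SV"
    using Y W generators bij_gen_group SV_inv by blast+
  define \<pi> where "\<pi> = W \<circ> h \<circ> inv Y"
  have Y_inv: "Y (inv Y \<kappa>) = \<kappa>" for \<kappa>
    using \<open>bij Y\<close> by (simp add: bij_is_surj surj_f_inv_f)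
  have "\<pi> \<in> SV"
    unfolding \<pi>_def using SV W h \<open>inv Y \<in> SV\<close> by (blast intro: SV_comp)
  then have "\<pi> \<in> BT_in {r, c}"
    by (rule SV_fixing_other_coordinates_imp_BT_in) (auto simp: \<pi>_def others root Y_inv)
  then have "inv W \<circ> \<pi> \<circ> Y \<in> ?G"
    using \<open>{r, c} \<in> E\<close> Y inv_in_gen_group[OF W generators]
    by (blast intro: gen_group.gen_comp gen_group.gen_base)
  moreover have "inv W \<circ> \<pi> \<circ> Y = h"
    using \<open>bij Y\<close> \<open>bij W\<close> by (simp add: \<pi>_def fun_eq_iff bij_is_inj)
  ultimately show "h \<in> ?G"
    by simp
qed

theorem proposition3p2:
  fixes E :: "'s set set"
  assumes "\<exists>a b :: 's. a \<noteq> b"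
    and "simple_graph_edges E"
    and "connected_graph E"
  shows "gen_group (\<Union>e \<in> E. BT_in e) = (SV :: (('s \<Rightarrow> cantor) \<Rightarrow> ('s \<Rightarrow> cantor)) set)"
proof
  show "gen_group (\<Union>e \<in> E. BT_in e) \<subseteq> SV"
    using BT_in_imp_SV by (intro gen_group_subset_SV) blast
  show "SV \<subseteq> gen_group (\<Union>e \<in> E. BT_in e)"
    using assms by (intro SV_subset_gen_group)
qed

end
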